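(* Let $(\Xi,\mathcal{F},P)$ be a probability space and $\{y_t\}_{t\in\mathbb{Z}}$ a real, mean-zero, covariance-stationary series on it; put $\mathcal{F}_t=\sigma(y_s,\,s\le t)$. Assume (D1) $P\{y_1^2>0\}=1$; (D2) $y_t=\sum_{s=0}^{\infty}\kappa_s\epsilon_{t-s}$ with $\kappa_0=1$, $\sum_s|\kappa_s|<\infty$, $\kappa(z)=\sum_s\kappa_s z^s\neq 0$ for $|z|\le 1$, where $\{\epsilon_t\}$ is a martingale difference sequence with respect to $\{\mathcal{F}_t\}$; (D3) $E[\epsilon_t^2\mid\mathcal{F}_{t-1}]=\sigma_\epsilon^2$ a.s. (constant); (D4) $\sup_t|\epsilon_t|\le K<\infty$ a.s. Fix $\beta\in[0,1]$, let $\theta_t,\bar P_t,e_t,\phi_t$ be generated by the recursive algorithm in the context, and assume there are random variables $k^*$ (integer, $0\le k^*<\infty$) and $K^*\in(0,1)$ such that a.s. $|\theta_{t+k^*}|\le K^*$ for all $t\ge1$. Then: (a) If $\tilde\kappa_j(t)$ ($j\ge0$, $t\ge1$) are $\mathcal{F}_{t-1}$-measurable with $|\tilde\kappa_j(t)|\le\tilde\kappa_j$ for all $j\ge0$, where $\sum_{j}\tilde\kappa_j<\infty$ a.s., then for every integer $p\ge1$ and each $0\le j<\infty$, almost surely as $t\to\infty$, $$\frac1t\sum_{s=2}^t\Big(\sum_{l=1}^{\min(j,s-1)}\tilde\kappa_{j-l}(s)\prod_{i=1}^l(s-i)^{-1}\bar P_{s-i}^{-1}\phi_{s-i-1}e_{s-i}\Big)^p\to0,$$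 $$\frac1t\sum_{s=2}^t\Big(\sum_{l=1}^{\min(j,s-1)}\tilde\kappa_{j-l}(s)\sum_{i=0}^l(s-i)^{-1}\bar P_{s-i}^{-1}\phi_{s-i-1}e_{s-i}\Big)^p\to0,$$ $$\frac1t\sum_{s=2}^t\Big(\sum_{l=1}^{\min(j,s-1)}\tilde\kappa_{j-l}(s)\prod_{i=1}^l(s-i)^{-1}\bar P_{s-i}^{-1}\phi_{s-i-1}e_{s-i}\Big)^p\epsilon_{s-j}^2\to0.$$ (b) For any integers $0\le i\le j<\infty$, $$\frac1t\sum_{s=1}^t(\kappa_j^\phi(s))^2\epsilon_{s-j}^2=\frac1t\sum_{s=i+1}^t(\kappa_j^\phi(s-i))^2\epsilon_{s-j}^2+o_{a.s.}(1).$$ (c) For integers $0\le j,l<\infty$ with $j\ne l$, $$\frac1t\sum_{s=\max(j+2,l+2)}^t\kappa_j^\phi(s)\epsilon_{s-j}\kappa_l^\phi(s)\epsilon_{s-l}\to0\quad\text{a.s.}$$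
   Context: Recursive algorithm: set $\theta_1=0$, $\bar P_1=0$, $e_1=y_1$, $x_1=y_1$, $\phi_1=x_1$, and for $t\ge2$: $x_t=y_t-\beta\theta_{t-1}x_{t-1}$; $e_t=y_t-\theta_{t-1}e_{t-1}$; $\phi_t=x_t-\theta_{t-1}\phi_{t-1}$; $\bar P_t=\frac1t\sum_{s=1}^{t-1}\phi_s^2$; $\theta_t=\theta_{t-1}+\bar P_t^{-1}\frac1t\phi_{t-1}e_t$. Coefficients: for $t\ge1$, $j\ge0$ (empty products equal 1), $\kappa_j^x(t)=\sum_{l=0}^{\min(j,t-1)}(-\beta)^l\kappa_{j-l}\prod_{i=1}^l\theta_{t-i}$; $\kappa_j^\phi(1)=\kappa_j$ and $\kappa_j^\phi(t)=\kappa_j^x(t)-\theta_{t-1}\kappa_{j-1}^\phi(t-1)$ for $t\ge2$, with $\kappa_{-1}^\phi(\cdot):=0$. These are the coefficients in $\phi_t=\sum_{j\ge0}\kappa_j^\phi(t)\epsilon_{t-j}$. The notation $o_{a.s.}(1)$ denotes a term converging to $0$ almost surely as $t\to\infty$. *)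

theory Defs
  imports "HOL-Probability.Probability"
begin

definition nat_filt :: "'a measure \<Rightarrow> (int \<Rightarrow> 'a \<Rightarrow> real) \<Rightarrow> int \<Rightarrow> 'a measure" where
  "nat_filt M y t = sigma (space M)
     {y s -` A \<inter> space M | s A. s \<le> t \<and> A \<in> sets borel}"

text \<open>The recursive algorithm, run on a sample path y_1, y_2, ... (given as a function
  nat => real; index 0 is unused).  algo_state beta y t = (theta_t, e_t, x_t, phi_t, S_t)
  where S_t = sum_{s=1}^{t-1} phi_s^2.  Index t = 0 is a dummy state.\<close>
fun algo_state :: "real \<Rightarrow> (nat \<Rightarrow> real) \<Rightarrow> nat \<Rightarrow> real \<times> real \<times> real \<times> real \<times> real" where
  "algo_state \<beta> y 0 = (0, 0, 0, 0, 0)"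
| "algo_state \<beta> y (Suc 0) = (0, y 1, y 1, y 1, 0)"
| "algo_state \<beta> y (Suc (Suc n)) =
     (let t = Suc (Suc n);
          (\<theta>p, ep, xp, \<phi>p, Sp) = algo_state \<beta> y (Suc n);
          xt = y t - \<beta> * \<theta>p * xp;
          et = y t - \<theta>p * ep;
          \<phi>t = xt - \<theta>p * \<phi>p;
          St = Sp + \<phi>p ^ 2;
          Pt = St / real t;
          \<theta>t = \<theta>p + inverse Pt * (1 / real t) * \<phi>p * et
      in (\<theta>t, et, xt, \<phi>t, St))"

definition alg_theta :: "real \<Rightarrow> (nat \<Rightarrow> real) \<Rightarrow> nat \<Rightarrow> real" where
  "alg_theta \<beta> y t = fst (algo_state \<beta> y t)"
definition alg_e :: "real \<Rightarrow> (nat \<Rightarrow> real) \<Rightarrow> nat \<Rightarrow> real" where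
  "alg_e \<beta> y t = fst (snd (algo_state \<beta> y t))"
definition alg_x :: "real \<Rightarrow> (nat \<Rightarrow> real) \<Rightarrow> nat \<Rightarrow> real" where
  "alg_x \<beta> y t = fst (snd (snd (algo_state \<beta> y t)))"
definition alg_phi :: "real \<Rightarrow> (nat \<Rightarrow> real) \<Rightarrow> nat \<Rightarrow> real" where
  "alg_phi \<beta> y t = fst (snd (snd (snd (algo_state \<beta> y t))))"
definition alg_Pbar :: "real \<Rightarrow> (nat \<Rightarrow> real) \<Rightarrow> nat \<Rightarrow> real" where
  "alg_Pbar \<beta> y t = (1 / real t) * (\<Sum>s = 1..<t. (alg_phi \<beta> y s) ^ 2)"

definition kappa_x :: "(nat \<Rightarrow> real) \<Rightarrow> real \<Rightarrow> (nat \<Rightarrow> real) \<Rightarrow> nat \<Rightarrow> nat \<Rightarrow> real" where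
  "kappa_x \<kappa> \<beta> \<theta> t j =
     (\<Sum>l = 0..min j (t - 1). (- \<beta>) ^ l * \<kappa> (j - l) * (\<Prod>i = 1..l. \<theta> (t - i)))"

fun kappa_phi :: "(nat \<Rightarrow> real) \<Rightarrow> real \<Rightarrow> (nat \<Rightarrow> real) \<Rightarrow> nat \<Rightarrow> nat \<Rightarrow> real" where
  "kappa_phi \<kappa> \<beta> \<theta> 0 j = 0"
| "kappa_phi \<kappa> \<beta> \<theta> (Suc 0) j = \<kappa> j"
| "kappa_phi \<kappa> \<beta> \<theta> (Suc (Suc n)) j =
     kappa_x \<kappa> \<beta> \<theta> (Suc (Suc n)) j
     - (if j = 0 then 0 else \<theta> (Suc n) * kappa_phi \<kappa> \<beta> \<theta> (Suc n) (j - 1))"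

end

theory Submission
  imports Defs
begin

text \<open>
  Everything rests on one pathwise fact: almost surely the increments
  theta_u - theta_(u-1) = u^-1 Pbar_u^-1 phi_(u-1) e_u tend to 0, so that theta, and with it
  every kappa^phi_j, is bounded with vanishing increments (slowly varying).
  Once |theta_t| <= K* < 1, the recursions for e, x and phi are contractions driven by the
  bounded y, so these sequences are bounded. Writing phi_u = eps_u + G_u with G_u
  F_(u-1)-measurable, a strong law for bounded martingale differences (fourth moments and
  Borel-Cantelli) gives S_t = sum phi_u^2 >= t sigma^2 / 2 eventually, hence
  phi_(u-1) e_u / S_u -> 0.
  Parts (a) and (b) are then Cesaro means of null sequences. For (c), kappa^phi at time s may be
  replaced by its value at s - j, which is F_(s-j-1)-measurable; the sum becomes an average of
  martingale differences in eps_(s-j) and vanishes by the same strong law.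
\<close>

definition alg_S :: "real \<Rightarrow> (nat \<Rightarrow> real) \<Rightarrow> nat \<Rightarrow> real" where
  "alg_S \<beta> y t = snd (snd (snd (snd (algo_state \<beta> y t))))"

lemma alg_zero:
  "alg_theta \<beta> y 0 = 0" "alg_e \<beta> y 0 = 0" "alg_x \<beta> y 0 = 0" "alg_phi \<beta> y 0 = 0" "alg_S \<beta> y 0 = 0"
  by (simp_all add: alg_theta_def alg_e_def alg_x_def alg_phi_def alg_S_def)

lemma alg_one:
  "alg_theta \<beta> y (Suc 0) = 0" "alg_e \<beta> y (Suc 0) = y 1" "alg_x \<beta> y (Suc 0) = y 1"
  "alg_phi \<beta> y (Suc 0) = y 1" "alg_S \<beta> y (Suc 0) = 0"
  by (simp_all add: alg_theta_def alg_e_def alg_x_def alg_phi_def alg_S_def)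

lemma alg_step:
  assumes "1 \<le> n"
  shows "alg_e \<beta> y (Suc n) = y (Suc n) - alg_theta \<beta> y n * alg_e \<beta> y n"
    and "alg_x \<beta> y (Suc n) = y (Suc n) - \<beta> * alg_theta \<beta> y n * alg_x \<beta> y n"
    and "alg_phi \<beta> y (Suc n) = alg_x \<beta> y (Suc n) - alg_theta \<beta> y n * alg_phi \<beta> y n"
    and "alg_S \<beta> y (Suc n) = alg_S \<beta> y n + (alg_phi \<beta> y n)\<^sup>2"
    and "alg_theta \<beta> y (Suc n) = alg_theta \<beta> y n
           + inverse (alg_S \<beta> y (Suc n) / real (Suc n)) * (1 / real (Suc n))
             * alg_phi \<beta> y n * alg_e \<beta> y (Suc n)"
proof -
  obtain m where "n = Suc m" using assms by (cases n) auto
  moreover obtain \<theta> e x \<phi> S where "algo_state \<beta> y n = (\<theta>, e, x, \<phi>, S)"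
    by (cases "algo_state \<beta> y n")
  ultimately show "alg_e \<beta> y (Suc n) = y (Suc n) - alg_theta \<beta> y n * alg_e \<beta> y n"
    and "alg_x \<beta> y (Suc n) = y (Suc n) - \<beta> * alg_theta \<beta> y n * alg_x \<beta> y n"
    and "alg_phi \<beta> y (Suc n) = alg_x \<beta> y (Suc n) - alg_theta \<beta> y n * alg_phi \<beta> y n"
    and "alg_S \<beta> y (Suc n) = alg_S \<beta> y n + (alg_phi \<beta> y n)\<^sup>2"
    and "alg_theta \<beta> y (Suc n) = alg_theta \<beta> y n
           + inverse (alg_S \<beta> y (Suc n) / real (Suc n)) * (1 / real (Suc n))
             * alg_phi \<beta> y n * alg_e \<beta> y (Suc n)"
    by (simp_all add: alg_theta_def alg_e_def alg_x_def alg_phi_def alg_S_def Let_def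
        del: algo_state.simps(2))
qed

lemma alg_S_eq_sum: "alg_S \<beta> y t = (\<Sum>s = 1..<t. (alg_phi \<beta> y s)\<^sup>2)"
proof (induction t)
  case (Suc t)
  then show ?case
    by (cases "t = 0") (simp_all add: alg_zero alg_one alg_step)
qed (simp add: alg_zero)

lemma alg_Pbar_eq: "alg_Pbar \<beta> y t = alg_S \<beta> y t / real t"
  by (simp add: alg_Pbar_def alg_S_eq_sum)

definition theta_incr :: "real \<Rightarrow> (nat \<Rightarrow> real) \<Rightarrow> nat \<Rightarrow> real" where
  "theta_incr \<beta> y u =
     (1 / real u) * inverse (alg_Pbar \<beta> y u) * alg_phi \<beta> y (u - 1) * alg_e \<beta> y u"

lemma theta_incr_eq: "theta_incr \<beta> y u = alg_phi \<beta> y (u - 1) * alg_e \<beta> y u / alg_S \<beta> y u"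
  by (cases "u = 0") (simp_all add: theta_incr_def alg_Pbar_eq alg_zero field_simps)

lemma theta_incr_eq_diff:
  assumes "1 \<le> u"
  shows "theta_incr \<beta> y u = alg_theta \<beta> y u - alg_theta \<beta> y (u - 1)"
proof (cases "u = 1")
  case True
  then show ?thesis by (simp add: theta_incr_eq alg_zero alg_one)
next
  case False
  then obtain n where "u = Suc n" "1 \<le> n" using assms by (cases u) auto
  then show ?thesis by (simp add: theta_incr_def alg_Pbar_eq alg_step(5))
qed

section \<open>Slowly varying sequences\<close>

lemma Bseq_mult_tendsto_zero:
  fixes f g :: "nat \<Rightarrow> 'a::real_normed_algebra"
  assumes "Bseq f" and "g \<longlonglongrightarrow> 0"
  shows "(\<lambda>n. f n * g n) \<longlonglongrightarrow> 0"
  using bounded_bilinear.Bfun_prod_Zfun[OF bounded_bilinear_mult assms(1), of g] assms(2)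
  by (simp add: tendsto_Zfun_iff)

lemma tendsto_zero_mult_Bseq:
  fixes f g :: "nat \<Rightarrow> 'a::real_normed_algebra"
  assumes "f \<longlonglongrightarrow> 0" and "Bseq g"
  shows "(\<lambda>n. f n * g n) \<longlonglongrightarrow> 0"
  using bounded_bilinear.Zfun_prod_Bfun[OF bounded_bilinear_mult _ assms(2), of f] assms(1)
  by (simp add: tendsto_Zfun_iff)

lemma Bseq_add_Bseq:
  fixes f g :: "nat \<Rightarrow> 'a::real_normed_vector"
  shows "Bseq f \<Longrightarrow> Bseq g \<Longrightarrow> Bseq (\<lambda>n. f n + g n)"
  using bounded_plus_comp[of f UNIV g] by (simp add: Bseq_eq_bounded)

lemma Bseq_eventually_bounded:
  fixes f :: "nat \<Rightarrow> real"
  assumes "\<And>n. N \<le> n \<Longrightarrow> \<bar>f n\<bar> \<le> B"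
  shows "Bseq f"
  by (rule Bseq_eventually_mono[of _ "\<lambda>_. B"])
     (use assms in \<open>auto simp: eventually_sequentially
        intro!: exI[of _ N] order_trans[OF _ abs_ge_self]\<close>)

definition slowly_varying :: "(nat \<Rightarrow> 'a::real_normed_field) \<Rightarrow> bool" where
  "slowly_varying f \<longleftrightarrow> Bseq f \<and> (\<lambda>n. f (Suc n) - f n) \<longlonglongrightarrow> 0"

lemma slowly_varying_Bseq: "slowly_varying f \<Longrightarrow> Bseq f"
  by (simp add: slowly_varying_def)

lemma slowly_varying_const: "slowly_varying (\<lambda>n. c)"
  by (simp add: slowly_varying_def)

lemma slowly_varying_add:
  assumes "slowly_varying f" and "slowly_varying g"
  shows "slowly_varying (\<lambda>n. f n + g n)"
proof -
  have "(\<lambda>n. (f (Suc n) - f n) + (g (Suc n) - g n)) \<longlonglongrightarrow> 0 + 0"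
    using assms unfolding slowly_varying_def by (intro tendsto_add) auto
  then show ?thesis
    using assms Bseq_add_Bseq[of f g] unfolding slowly_varying_def by (simp add: algebra_simps)
qed

lemma slowly_varying_minus: "slowly_varying f \<Longrightarrow> slowly_varying (\<lambda>n. - f n)"
  using tendsto_minus[of "\<lambda>n. f (Suc n) - f n" 0 sequentially]
  by (simp add: slowly_varying_def Bseq_minus_iff)

lemma slowly_varying_diff:
  "slowly_varying f \<Longrightarrow> slowly_varying g \<Longrightarrow> slowly_varying (\<lambda>n. f n - g n)"
  using slowly_varying_add[of f "\<lambda>n. - g n"] slowly_varying_minus[of g] by simp

lemma slowly_varying_mult:
  assumes f: "slowly_varying f" and g: "slowly_varying g"
  shows "slowly_varying (\<lambda>n. f n * g n)"
proof -
  have "Bseq f" "Bseq g" using f g by (simp_all add: slowly_varying_def)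
  then have "Bseq (\<lambda>n. f (Suc n))" using Bseq_ignore_initial_segment[of f 1] by simp
  have "(\<lambda>n. f (Suc n) * (g (Suc n) - g n) + g n * (f (Suc n) - f n)) \<longlonglongrightarrow> 0 + 0"
    using f g unfolding slowly_varying_def
    by (intro tendsto_add Bseq_mult_tendsto_zero \<open>Bseq g\<close> \<open>Bseq (\<lambda>n. f (Suc n))\<close>) auto
  then show ?thesis
    using Bseq_mult[OF \<open>Bseq f\<close> \<open>Bseq g\<close>] unfolding slowly_varying_def
    by (simp add: algebra_simps)
qed

lemma slowly_varying_sum:
  "(\<And>i. i \<in> A \<Longrightarrow> slowly_varying (f i)) \<Longrightarrow> slowly_varying (\<lambda>n. \<Sum>i\<in>A. f i n)"
  by (induction A rule: infinite_finite_induct) (simp_all add: slowly_varying_const slowly_varying_add)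

lemma slowly_varying_prod:
  "(\<And>i. i \<in> A \<Longrightarrow> slowly_varying (f i)) \<Longrightarrow> slowly_varying (\<lambda>n. \<Prod>i\<in>A. f i n)"
  by (induction A rule: infinite_finite_induct) (simp_all add: slowly_varying_const slowly_varying_mult)

lemma slowly_varying_eventually_eq:
  assumes f: "slowly_varying f" and eq: "\<And>n. N \<le> n \<Longrightarrow> f n = g n"
  shows "slowly_varying g"
proof -
  have "Bseq (\<lambda>n. g (n + N))"
    using Bseq_ignore_initial_segment[OF slowly_varying_Bseq[OF f], of N] eq by simp
  then have "Bseq g" by (rule Bseq_offset)
  have "(\<lambda>n. g (Suc (n + N)) - g (n + N)) \<longlonglongrightarrow> 0"
    using LIMSEQ_ignore_initial_segment[of "\<lambda>n. f (Suc n) - f n" 0 N] f eq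
    by (simp add: slowly_varying_def)
  then have "(\<lambda>n. g (Suc n) - g n) \<longlonglongrightarrow> 0" by (rule LIMSEQ_offset)
  with \<open>Bseq g\<close> show ?thesis unfolding slowly_varying_def by simp
qed

lemma slowly_varying_shift:
  assumes f: "slowly_varying f"
  shows "slowly_varying (\<lambda>n. f (n - k))"
proof -
  obtain K where "\<And>n. norm (f n) \<le> K" using f unfolding slowly_varying_def Bseq_def by blast
  then have "Bseq (\<lambda>n. f (n - k))" by (intro BseqI')
  moreover have "(\<lambda>n. f (Suc (n + k) - k) - f (n + k - k)) \<longlonglongrightarrow> 0"
    using f by (simp add: slowly_varying_def)
  then have "(\<lambda>n. f (Suc n - k) - f (n - k)) \<longlonglongrightarrow> 0" by (rule LIMSEQ_offset)
  ultimately show ?thesis unfolding slowly_varying_def by simp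
qed

lemma slowly_varying_diff_shift_tendsto_zero:
  "slowly_varying f \<Longrightarrow> (\<lambda>n. f n - f (n - i)) \<longlonglongrightarrow> 0"
proof (induction i)
  case (Suc i)
  have "(\<lambda>n. f (n - i) - f (n - Suc i)) \<longlonglongrightarrow> 0"
    by (rule LIMSEQ_offset[where k = "Suc i"])
       (use Suc.prems in \<open>simp add: slowly_varying_def add.commute\<close>)
  from tendsto_add[OF Suc.IH[OF Suc.prems] this] show ?case by simp
qed simp

lemma kappa_x_eq:
  "Suc j \<le> t \<Longrightarrow> kappa_x \<kappa> \<beta> \<theta> t j = (\<Sum>l = 0..j. (- \<beta>) ^ l * \<kappa> (j - l) * (\<Prod>i = 1..l. \<theta> (t - i)))"
  unfolding kappa_x_def by (simp add: min_absorb1)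

lemma kappa_phi_eq:
  assumes "2 \<le> t"
  shows "kappa_phi \<kappa> \<beta> \<theta> t j =
     kappa_x \<kappa> \<beta> \<theta> t j - (if j = 0 then 0 else \<theta> (t - 1) * kappa_phi \<kappa> \<beta> \<theta> (t - 1) (j - 1))"
proof -
  obtain n where "t = Suc (Suc n)" using assms by (metis add_2_eq_Suc le_Suc_ex)
  then show ?thesis by simp
qed

lemma slowly_varying_kappa_x:
  assumes "slowly_varying \<theta>"
  shows "slowly_varying (\<lambda>t. kappa_x \<kappa> \<beta> \<theta> t j)"
proof (rule slowly_varying_eventually_eq[of _ "Suc j"])
  show "slowly_varying (\<lambda>t. \<Sum>l = 0..j. (- \<beta>) ^ l * \<kappa> (j - l) * (\<Prod>i = 1..l. \<theta> (t - i)))"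
    by (intro slowly_varying_sum slowly_varying_mult slowly_varying_const slowly_varying_prod
        slowly_varying_shift assms)
qed (simp add: kappa_x_eq)

lemma slowly_varying_kappa_phi:
  assumes "slowly_varying \<theta>"
  shows "slowly_varying (\<lambda>t. kappa_phi \<kappa> \<beta> \<theta> t j)"
proof (induction j)
  case 0
  show ?case
    by (rule slowly_varying_eventually_eq[OF slowly_varying_kappa_x[OF assms], of 2])
       (simp add: kappa_phi_eq)
next
  case (Suc j)
  have "slowly_varying (\<lambda>t. kappa_x \<kappa> \<beta> \<theta> t (Suc j) - \<theta> (t - 1) * kappa_phi \<kappa> \<beta> \<theta> (t - 1) j)"
    by (intro slowly_varying_diff slowly_varying_mult slowly_varying_kappa_x slowly_varying_shift
        assms Suc)
  then show ?case by (rule slowly_varying_eventually_eq[of _ 2]) (simp add: kappa_phi_eq)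
qed

section \<open>Boundedness of the recursions\<close>

lemma abs_sums_le:
  fixes a e :: "nat \<Rightarrow> real"
  assumes "(\<lambda>s. a s * e s) sums z" and "\<And>s. \<bar>e s\<bar> \<le> K" and "summable (\<lambda>s. \<bar>a s\<bar>)"
  shows "\<bar>z\<bar> \<le> K * (\<Sum>s. \<bar>a s\<bar>)"
proof -
  have le: "\<bar>a s * e s\<bar> \<le> \<bar>a s\<bar> * K" for s
    unfolding abs_mult by (intro mult_left_mono assms(2)) auto
  have sK: "summable (\<lambda>s. \<bar>a s\<bar> * K)" by (intro summable_mult2 assms(3))
  then have sa: "summable (\<lambda>s. \<bar>a s * e s\<bar>)"
    by (rule summable_comparison_test'[where N = 0]) (simp add: le)
  have "\<bar>z\<bar> = \<bar>\<Sum>s. a s * e s\<bar>" using sums_unique[OF assms(1)] by simp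
  also have "\<dots> \<le> (\<Sum>s. \<bar>a s * e s\<bar>)" by (rule summable_rabs[OF sa])
  also have "\<dots> \<le> (\<Sum>s. \<bar>a s\<bar> * K)" by (rule suminf_le[OF le sa sK])
  also have "\<dots> = K * (\<Sum>s. \<bar>a s\<bar>)" using suminf_mult2[OF assms(3), of K] by (simp add: mult.commute)
  finally show ?thesis .
qed

lemma Bseq_contracting_recurrence:
  fixes a :: "nat \<Rightarrow> real"
  assumes rec: "\<And>n. N \<le> n \<Longrightarrow> \<bar>a (Suc n)\<bar> \<le> B + c * \<bar>a n\<bar>" and c: "0 \<le> c" "c < 1"
  shows "Bseq a"
proof -
  define R where "R = max \<bar>a N\<bar> (B / (1 - c))"
  have "B / (1 - c) \<le> R" by (simp add: R_def)
  then have "B \<le> (1 - c) * R" using c by (simp add: field_simps)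
  then have BR: "B + c * R \<le> R" by (simp add: algebra_simps)
  have "\<bar>a n\<bar> \<le> R" if "N \<le> n" for n
    using that
  proof (induction n rule: dec_induct)
    case (step n)
    have "\<bar>a (Suc n)\<bar> \<le> B + c * \<bar>a n\<bar>" using rec step by simp
    also have "\<dots> \<le> B + c * R" using step c by (simp add: mult_left_mono)
    finally show ?case using BR by linarith
  qed (simp add: R_def)
  then show ?thesis by (rule Bseq_eventually_bounded)
qed

lemma abs_diff_mult_le:
  fixes a b c :: real
  assumes "\<bar>a\<bar> \<le> A" and "\<bar>b\<bar> \<le> k"
  shows "\<bar>a - b * c\<bar> \<le> A + k * \<bar>c\<bar>"
proof -
  have "\<bar>a - b * c\<bar> \<le> \<bar>a\<bar> + \<bar>b\<bar> * \<bar>c\<bar>" by (simp add: abs_mult[symmetric] abs_triangle_ineq4)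
  also have "\<dots> \<le> A + k * \<bar>c\<bar>" using assms by (intro add_mono mult_right_mono) auto
  finally show ?thesis .
qed

lemma Bseq_alg_e_x_phi:
  fixes Y :: "nat \<Rightarrow> real"
  assumes Y: "\<And>n. \<bar>Y n\<bar> \<le> B"
    and \<theta>: "\<And>n. N \<le> n \<Longrightarrow> \<bar>alg_theta \<beta> Y n\<bar> \<le> c" and c: "c < 1"
    and \<beta>: "0 \<le> \<beta>" "\<beta> \<le> 1"
  shows "Bseq (alg_e \<beta> Y)" and "Bseq (alg_x \<beta> Y)" and "Bseq (alg_phi \<beta> Y)"
proof -
  define N' where "N' = max N 1"
  have step: "alg_e \<beta> Y (Suc n) = Y (Suc n) - alg_theta \<beta> Y n * alg_e \<beta> Y n"
    "alg_x \<beta> Y (Suc n) = Y (Suc n) - (\<beta> * alg_theta \<beta> Y n) * alg_x \<beta> Y n"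
    "alg_phi \<beta> Y (Suc n) = alg_x \<beta> Y (Suc n) - alg_theta \<beta> Y n * alg_phi \<beta> Y n"
    if "N' \<le> n" for n
    using that alg_step[of n \<beta> Y] by (simp_all add: N'_def mult.assoc)
  have \<theta>': "\<bar>alg_theta \<beta> Y n\<bar> \<le> c" if "N' \<le> n" for n
    using \<theta> that by (simp add: N'_def)
  have \<beta>\<theta>: "\<bar>\<beta> * alg_theta \<beta> Y n\<bar> \<le> c" if "N' \<le> n" for n
  proof -
    have "\<bar>\<beta> * alg_theta \<beta> Y n\<bar> \<le> 1 * \<bar>alg_theta \<beta> Y n\<bar>"
      unfolding abs_mult using \<beta> by (intro mult_right_mono) auto
    then show ?thesis using \<theta>'[OF that] by simp
  qed
  have c0: "0 \<le> c" using \<theta>'[of N'] by simp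
  show "Bseq (alg_e \<beta> Y)"
  proof (rule Bseq_contracting_recurrence[of N' _ B c])
    fix n assume "N' \<le> n"
    then show "\<bar>alg_e \<beta> Y (Suc n)\<bar> \<le> B + c * \<bar>alg_e \<beta> Y n\<bar>"
      unfolding step(1)[OF \<open>N' \<le> n\<close>] by (intro abs_diff_mult_le Y \<theta>')
  qed (use c c0 in auto)
  show "Bseq (alg_x \<beta> Y)"
  proof (rule Bseq_contracting_recurrence[of N' _ B c])
    fix n assume "N' \<le> n"
    then show "\<bar>alg_x \<beta> Y (Suc n)\<bar> \<le> B + c * \<bar>alg_x \<beta> Y n\<bar>"
      unfolding step(2)[OF \<open>N' \<le> n\<close>] by (intro abs_diff_mult_le Y \<beta>\<theta>)
  qed (use c c0 in auto)
  then obtain X where X: "\<And>n. \<bar>alg_x \<beta> Y n\<bar> \<le> X" unfolding Bseq_def by auto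
  show "Bseq (alg_phi \<beta> Y)"
  proof (rule Bseq_contracting_recurrence[of N' _ X c])
    fix n assume "N' \<le> n"
    then show "\<bar>alg_phi \<beta> Y (Suc n)\<bar> \<le> X + c * \<bar>alg_phi \<beta> Y n\<bar>"
      unfolding step(3)[OF \<open>N' \<le> n\<close>] by (intro abs_diff_mult_le X \<theta>')
  qed (use c c0 in auto)
qed

section \<open>Cesaro means and the increments of theta\<close>

lemma cesaro_abs_tendsto_zero:
  fixes a :: "nat \<Rightarrow> real"
  assumes a: "a \<longlonglongrightarrow> 0"
  shows "(\<lambda>t. (\<Sum>s\<le>t. \<bar>a s\<bar>) / real t) \<longlonglongrightarrow> 0"
proof (rule LIMSEQ_I)
  fix r :: real assume r: "0 < r"
  obtain N where N: "\<And>s. N \<le> s \<Longrightarrow> \<bar>a s\<bar> < r / 4"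
    using LIMSEQ_D[OF a, of "r / 4"] r by auto
  define C where "C = (\<Sum>s<N. \<bar>a s\<bar>)"
  obtain T :: nat where T: "2 * C / r < real T" using reals_Archimedean2 by blast
  have "norm ((\<Sum>s\<le>t. \<bar>a s\<bar>) / real t - 0) < r" if t: "max (max N T) 1 \<le> t" for t
  proof -
    have split: "{..t} = {..<N} \<union> {N..t}" using t by auto
    have "(\<Sum>s\<le>t. \<bar>a s\<bar>) = C + (\<Sum>s = N..t. \<bar>a s\<bar>)"
      unfolding C_def split by (subst sum.union_disjoint) auto
    also have "(\<Sum>s = N..t. \<bar>a s\<bar>) \<le> (\<Sum>s = N..t. r / 4)"
      by (intro sum_mono) (auto dest!: N)
    also have "\<dots> = real (Suc t - N) * (r / 4)" by simp
    also have "\<dots> \<le> (2 * real t) * (r / 4)"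
      using t r by (intro mult_right_mono) (auto simp: of_nat_diff)
    also have "\<dots> = real t * (r / 2)" by simp
    also have "C < real t * (r / 2)"
    proof -
      have "2 * C / r < real t" using T t by simp
      then show ?thesis using r by (simp add: field_simps)
    qed
    finally have "(\<Sum>s\<le>t. \<bar>a s\<bar>) / real t < r"
      using t by (simp add: field_simps)
    then show ?thesis by (simp add: sum_nonneg)
  qed
  then show "\<exists>n0. \<forall>t\<ge>n0. norm ((\<Sum>s\<le>t. \<bar>a s\<bar>) / real t - 0) < r" by blast
qed

lemma cesaro_tendsto_zero:
  fixes a :: "nat \<Rightarrow> real"
  assumes "a \<longlonglongrightarrow> 0"
  shows "(\<lambda>t. (1 / real t) * (\<Sum>s = m..t. a s)) \<longlonglongrightarrow> 0"
proof (rule Lim_null_comparison[OF always_eventually cesaro_abs_tendsto_zero[OF assms]], rule allI)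
  fix t
  have "\<bar>\<Sum>s = m..t. a s\<bar> \<le> (\<Sum>s\<le>t. \<bar>a s\<bar>)"
    by (rule order_trans[OF sum_abs sum_mono2]) auto
  then show "norm ((1 / real t) * (\<Sum>s = m..t. a s)) \<le> (\<Sum>s\<le>t. \<bar>a s\<bar>) / real t"
    by (simp add: abs_mult divide_right_mono)
qed

lemma tendsto_zero_shift:
  fixes g :: "nat \<Rightarrow> real"
  shows "g \<longlonglongrightarrow> 0 \<Longrightarrow> (\<lambda>s. g (s - i)) \<longlonglongrightarrow> 0"
  by (rule LIMSEQ_offset[where k = i]) simp

lemma tendsto_zero_power:
  fixes f :: "nat \<Rightarrow> real"
  shows "f \<longlonglongrightarrow> 0 \<Longrightarrow> 1 \<le> p \<Longrightarrow> (\<lambda>s. f s ^ p) \<longlonglongrightarrow> 0"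
  using tendsto_power[of f 0 sequentially p] by (simp add: power_0_left)

lemma inverse_alg_S_tendsto_zero:
  fixes \<epsilon> G :: "nat \<Rightarrow> real"
  assumes \<phi>: "\<And>u. 1 \<le> u \<Longrightarrow> alg_phi \<beta> Y u = \<epsilon> u + G u"
    and mean_sq: "(\<lambda>n. (\<Sum>u = 1..<n. (\<epsilon> u)\<^sup>2 - \<sigma>2) / real n) \<longlonglongrightarrow> 0"
    and mean_cross: "(\<lambda>n. (\<Sum>u = 1..<n. G u * \<epsilon> u) / real n) \<longlonglongrightarrow> 0"
    and \<sigma>2: "0 < \<sigma>2"
  shows "(\<lambda>n. inverse (alg_S \<beta> Y n)) \<longlonglongrightarrow> 0"
proof -
  \<comment> \<open>S_n >= n R_n because (eps + G)^2 >= eps^2 + 2 G eps, and R_n -> sigma2\<close>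
  define R where "R n = (\<Sum>u = 1..<n. (\<epsilon> u)\<^sup>2 - \<sigma>2) / real n
    + 2 * ((\<Sum>u = 1..<n. G u * \<epsilon> u) / real n) + \<sigma>2 - \<sigma>2 * inverse (real n)" for n
  have "R \<longlonglongrightarrow> 0 + 2 * 0 + \<sigma>2 - \<sigma>2 * 0"
    unfolding R_def by (intro tendsto_intros mean_sq mean_cross lim_inverse_n)
  then have "eventually (\<lambda>n. \<sigma>2 / 2 < R n) sequentially"
    using \<sigma>2 by (intro order_tendstoD(1)) auto
  have S_ge: "real n * R n \<le> alg_S \<beta> Y n" if "1 \<le> n" for n
  proof -
    have "real n * R n = (\<Sum>u = 1..<n. (\<epsilon> u)\<^sup>2 - \<sigma>2) + 2 * (\<Sum>u = 1..<n. G u * \<epsilon> u)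
        + (real n - 1) * \<sigma>2"
      unfolding R_def using that by (simp add: field_simps)
    also have "(\<Sum>u = 1..<n. (\<epsilon> u)\<^sup>2 - \<sigma>2) = (\<Sum>u = 1..<n. (\<epsilon> u)\<^sup>2) - (real n - 1) * \<sigma>2"
      using that by (simp add: sum_subtractf)
    also have "(\<Sum>u = 1..<n. (\<epsilon> u)\<^sup>2) - (real n - 1) * \<sigma>2 + 2 * (\<Sum>u = 1..<n. G u * \<epsilon> u)
        + (real n - 1) * \<sigma>2 = (\<Sum>u = 1..<n. (\<epsilon> u)\<^sup>2 + 2 * (G u * \<epsilon> u))"
      by (simp add: sum.distrib sum_distrib_left)
    also have "\<dots> \<le> (\<Sum>u = 1..<n. (\<epsilon> u + G u)\<^sup>2)"
      by (intro sum_mono) (simp add: power2_eq_square algebra_simps)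
    also have "\<dots> = alg_S \<beta> Y n"
      by (simp add: alg_S_eq_sum \<phi>)
    finally show ?thesis .
  qed
  show ?thesis
  proof (rule Lim_null_comparison)
    show "(\<lambda>n. 2 / \<sigma>2 * inverse (real n)) \<longlonglongrightarrow> 0"
      by (rule tendsto_mult_right_zero[OF lim_inverse_n])
    show "\<forall>\<^sub>F n in sequentially. norm (inverse (alg_S \<beta> Y n)) \<le> 2 / \<sigma>2 * inverse (real n)"
      using \<open>eventually (\<lambda>n. \<sigma>2 / 2 < R n) sequentially\<close> eventually_ge_at_top[of 1]
    proof eventually_elim
      case (elim n)
      have pos: "0 < real n * (\<sigma>2 / 2)" using elim \<sigma>2 by simp
      have le: "real n * (\<sigma>2 / 2) \<le> alg_S \<beta> Y n"
        using S_ge[OF elim(2)] mult_left_mono[OF less_imp_le[OF elim(1)], of "real n"] by simp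
      then have "norm (inverse (alg_S \<beta> Y n)) = inverse (alg_S \<beta> Y n)"
        using pos by simp
      also have "\<dots> \<le> inverse (real n * (\<sigma>2 / 2))"
        by (rule le_imp_inverse_le[OF le pos])
      finally show ?case by (simp add: field_simps)
    qed
  qed
qed

lemma theta_incr_tendsto_zero:
  assumes "Bseq (alg_phi \<beta> Y)" and "Bseq (alg_e \<beta> Y)"
    and "(\<lambda>n. inverse (alg_S \<beta> Y n)) \<longlonglongrightarrow> 0"
  shows "theta_incr \<beta> Y \<longlonglongrightarrow> 0"
proof -
  have "Bseq (\<lambda>u. alg_phi \<beta> Y (u - 1) * alg_e \<beta> Y u)"
    using Bseq_mult[OF Bseq_subseq[OF assms(1), of "\<lambda>u. u - 1"] assms(2)] .
  moreover have "theta_incr \<beta> Y = (\<lambda>u. alg_phi \<beta> Y (u - 1) * alg_e \<beta> Y u * inverse (alg_S \<beta> Y u))"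
    by (simp add: fun_eq_iff theta_incr_eq divide_inverse)
  ultimately show ?thesis using Bseq_mult_tendsto_zero[OF _ assms(3)] by simp
qed

lemma slowly_varying_alg_theta:
  assumes "\<And>n. N \<le> n \<Longrightarrow> \<bar>alg_theta \<beta> Y n\<bar> \<le> c" and "theta_incr \<beta> Y \<longlonglongrightarrow> 0"
  shows "slowly_varying (alg_theta \<beta> Y)"
  unfolding slowly_varying_def
proof
  show "Bseq (alg_theta \<beta> Y)" by (rule Bseq_eventually_bounded) (rule assms(1))
  show "(\<lambda>n. alg_theta \<beta> Y (Suc n) - alg_theta \<beta> Y n) \<longlonglongrightarrow> 0"
    using LIMSEQ_Suc[OF assms(2)] by (simp add: theta_incr_eq_diff)
qed

lemma weighted_sum_tendsto_zero:
  fixes F :: "nat \<Rightarrow> nat \<Rightarrow> real" and kt :: "nat \<Rightarrow> nat \<Rightarrow> real"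
  assumes F: "\<And>l. 1 \<le> l \<Longrightarrow> F l \<longlonglongrightarrow> 0" and kt: "\<And>j t. 1 \<le> t \<Longrightarrow> \<bar>kt j t\<bar> \<le> kb j"
  shows "(\<lambda>s. \<Sum>l = 1..min j (s - 1). kt (j - l) s * F l s) \<longlonglongrightarrow> 0"
proof -
  have "Bseq (kt i)" for i by (rule Bseq_eventually_bounded[of 1]) (rule kt)
  then have "(\<lambda>s. \<Sum>l = 1..j. kt (j - l) s * F l s) \<longlonglongrightarrow> (\<Sum>l = 1..j. 0)"
    by (intro tendsto_sum Bseq_mult_tendsto_zero F) auto
  then have "(\<lambda>s. \<Sum>l = 1..j. kt (j - l) s * F l s) \<longlonglongrightarrow> 0" by simp
  then show ?thesis
    by (rule Lim_transform_eventually)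
       (auto simp: eventually_sequentially min_absorb1 intro!: exI[of _ "Suc j"])
qed

lemma shifted_prod_tendsto_zero:
  fixes D :: "nat \<Rightarrow> real"
  assumes "D \<longlonglongrightarrow> 0" and "1 \<le> l"
  shows "(\<lambda>s. \<Prod>i = 1..l. D (s - i)) \<longlonglongrightarrow> 0"
  using tendsto_prod[of "{1..l}" "\<lambda>i s. D (s - i)" "\<lambda>_. 0"] tendsto_zero_shift[OF assms(1)] assms(2)
  by (simp add: power_0_left)

lemma shifted_sum_tendsto_zero:
  fixes D :: "nat \<Rightarrow> real"
  assumes "D \<longlonglongrightarrow> 0"
  shows "(\<lambda>s. \<Sum>i = 0..l. D (s - i)) \<longlonglongrightarrow> 0"
  using tendsto_sum[of "{0..l}" "\<lambda>i s. D (s - i)" "\<lambda>_. 0"] tendsto_zero_shift[OF assms] by simp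

lemma cesaro_sq_shift_diff_tendsto_zero:
  fixes k E :: "nat \<Rightarrow> real"
  assumes k: "slowly_varying k" and E: "Bseq E"
  shows "(\<lambda>t. (1 / real t) * (\<Sum>s = 1..t. (k s)\<^sup>2 * E s)
             - (1 / real t) * (\<Sum>s = i + 1..t. (k (s - i))\<^sup>2 * E s)) \<longlonglongrightarrow> 0"
proof -
  define c where "c s = (k s)\<^sup>2 * E s - (if i + 1 \<le> s then (k (s - i))\<^sup>2 * E s else 0)" for s
  have "{s \<in> {1..t}. i + 1 \<le> s} = {i + 1..t}" for t by auto
  then have shift: "(\<Sum>s = i + 1..t. (k (s - i))\<^sup>2 * E s)
      = (\<Sum>s = 1..t. if i + 1 \<le> s then (k (s - i))\<^sup>2 * E s else 0)" for t
    by (simp add: sum.inter_filter[symmetric])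
  have "Bseq (\<lambda>s. E s * (k s + k (s - i)))"
    using slowly_varying_Bseq[OF k] slowly_varying_Bseq[OF slowly_varying_shift[OF k]]
    by (intro Bseq_mult E Bseq_add_Bseq)
  from Bseq_mult_tendsto_zero[OF this slowly_varying_diff_shift_tendsto_zero[OF k]]
  have "c \<longlonglongrightarrow> 0"
    by (rule Lim_transform_eventually)
       (auto simp: eventually_sequentially c_def power2_eq_square algebra_simps
         intro!: exI[of _ "Suc i"])
  from cesaro_tendsto_zero[OF this, of 1] show ?thesis
    by (simp only: shift c_def sum_subtractf right_diff_distrib)
qed

lemma cesaro_shift_product_tendsto_zero:
  fixes kj kl ea eb :: "nat \<Rightarrow> real"
  assumes kj: "slowly_varying kj" and kl: "slowly_varying kl" and "Bseq ea" and "Bseq eb"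
    and shifted: "(\<lambda>t. (1 / real t) * (\<Sum>s = m..t. kj (s - j) * kl (s - j) * ea s * eb s)) \<longlonglongrightarrow> 0"
  shows "(\<lambda>t. (1 / real t) * (\<Sum>s = m..t. kj s * ea s * kl s * eb s)) \<longlonglongrightarrow> 0"
proof -
  define c where "c s = kj s * kl s" for s
  have "slowly_varying c" unfolding c_def by (intro slowly_varying_mult kj kl)
  have "(\<lambda>s. (ea s * eb s) * (c s - c (s - j))) \<longlonglongrightarrow> 0"
    by (intro Bseq_mult_tendsto_zero Bseq_mult assms slowly_varying_diff_shift_tendsto_zero
        \<open>slowly_varying c\<close>)
  from tendsto_add[OF cesaro_tendsto_zero[OF this, of m] shifted]
  have "(\<lambda>t. (1 / real t) * ((\<Sum>s = m..t. (ea s * eb s) * (c s - c (s - j)))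
      + (\<Sum>s = m..t. kj (s - j) * kl (s - j) * ea s * eb s))) \<longlonglongrightarrow> 0"
    by (simp add: distrib_left)
  moreover have "(\<Sum>s = m..t. (ea s * eb s) * (c s - c (s - j)))
      + (\<Sum>s = m..t. kj (s - j) * kl (s - j) * ea s * eb s)
      = (\<Sum>s = m..t. kj s * ea s * kl s * eb s)" for t
    by (subst sum.distrib[symmetric]) (rule sum.cong, simp_all add: c_def algebra_simps)
  ultimately show ?thesis by simp
qed

section \<open>A strong law for bounded martingale differences\<close>

lemma AE_tendsto_zero_if_summable_integral:
  fixes Z :: "nat \<Rightarrow> 'a \<Rightarrow> real"
  assumes int: "\<And>n. integrable M (Z n)" and nonneg: "\<And>n x. 0 \<le> Z n x"
    and summable: "summable (\<lambda>n. integral\<^sup>L M (Z n))"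
  shows "AE x in M. (\<lambda>n. Z n x) \<longlonglongrightarrow> 0"
proof -
  have [measurable]: "Z n \<in> borel_measurable M" for n using int by blast
  have "(\<integral>\<^sup>+x. (\<Sum>n. ennreal (Z n x)) \<partial>M) = (\<Sum>n. \<integral>\<^sup>+x. ennreal (Z n x) \<partial>M)"
    by (rule nn_integral_suminf) measurable
  also have "\<dots> = (\<Sum>n. ennreal (integral\<^sup>L M (Z n)))"
    by (intro suminf_cong nn_integral_eq_integral int) (simp add: nonneg)
  also have "\<dots> < \<infinity>"
  proof -
    have "0 \<le> integral\<^sup>L M (Z n)" for n by (simp add: integral_nonneg_AE nonneg)
    from ennreal_suminf_neq_top[OF summable this] show ?thesis by (simp add: less_top[symmetric])
  qed
  finally have "(\<integral>\<^sup>+x. (\<Sum>n. ennreal (Z n x)) \<partial>M) \<noteq> \<infinity>" by simp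
  then have "AE x in M. (\<Sum>n. ennreal (Z n x)) \<noteq> \<infinity>"
    by (intro nn_integral_PInf_AE) measurable
  then show ?thesis
  proof eventually_elim
    case (elim x)
    then have "summable (\<lambda>n. Z n x)" by (intro summable_suminf_not_top nonneg) simp
    then show ?case by (rule summable_LIMSEQ_zero)
  qed
qed

lemma power_le_power_if_abs_le:
  fixes a :: "'a::linordered_idom"
  assumes "\<bar>a\<bar> \<le> C"
  shows "a ^ k \<le> C ^ k"
  by (metis assms abs_ge_self abs_ge_zero order_trans power_abs power_mono)

context prob_space
begin

lemma AE_bound_nonneg:
  assumes "AE x in M. \<bar>f x\<bar> \<le> (C::real)"
  shows "0 \<le> C"
proof -
  have "AE x in M. 0 \<le> C" using assms by eventually_elim linarith
  then show ?thesis by simp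
qed

lemma integrable_partial_sum_power_mult:
  fixes \<xi> :: "nat \<Rightarrow> 'a \<Rightarrow> real"
  assumes meas: "\<And>n. \<xi> n \<in> borel_measurable M" and bnd: "AE x in M. \<forall>n. \<bar>\<xi> n x\<bar> \<le> C"
  shows "integrable M (\<lambda>x. (\<Sum>u<n. \<xi> u x) ^ k * \<xi> n x ^ m)"
proof (rule integrable_const_bound[where B = "(real n * C) ^ k * C ^ m"])
  show "AE x in M. norm ((\<Sum>u<n. \<xi> u x) ^ k * \<xi> n x ^ m) \<le> (real n * C) ^ k * C ^ m"
    using bnd
  proof eventually_elim
    case (elim x)
    then have "0 \<le> C" by (meson abs_ge_zero order_trans)
    have "\<bar>\<Sum>u<n. \<xi> u x\<bar> \<le> (\<Sum>u<n. \<bar>\<xi> u x\<bar>)" by (rule sum_abs)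
    also have "\<dots> \<le> (\<Sum>u<n. C)" by (intro sum_mono) (use elim in auto)
    finally have "\<bar>\<Sum>u<n. \<xi> u x\<bar> \<le> real n * C" by simp
    then show ?case
      using elim \<open>0 \<le> C\<close> by (simp add: abs_mult power_abs mult_mono power_mono)
  qed
qed (use meas in measurable)

lemma orthogonal_sum_second_moment:
  fixes \<xi> :: "nat \<Rightarrow> 'a \<Rightarrow> real"
  assumes meas: "\<And>n. \<xi> n \<in> borel_measurable M" and bnd: "AE x in M. \<forall>n. \<bar>\<xi> n x\<bar> \<le> C"
    and orth: "\<And>n. integral\<^sup>L M (\<lambda>x. (\<Sum>u<n. \<xi> u x) * \<xi> n x) = 0"
  shows "integral\<^sup>L M (\<lambda>x. (\<Sum>u<n. \<xi> u x)\<^sup>2) \<le> real n * C\<^sup>2"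
proof (induction n)
  case (Suc n)
  define S where "S x = (\<Sum>u<n. \<xi> u x)" for x
  note int = integrable_partial_sum_power_mult[OF meas bnd, of n, folded S_def]
  have "integral\<^sup>L M (\<lambda>x. (\<Sum>u<Suc n. \<xi> u x)\<^sup>2)
      = integral\<^sup>L M (\<lambda>x. S x ^ 2 * \<xi> n x ^ 0 + 2 * (S x ^ 1 * \<xi> n x ^ 1) + S x ^ 0 * \<xi> n x ^ 2)"
    by (simp add: S_def power2_eq_square algebra_simps)
  also have "\<dots> = integral\<^sup>L M (\<lambda>x. S x ^ 2) + 2 * integral\<^sup>L M (\<lambda>x. S x * \<xi> n x)
      + integral\<^sup>L M (\<lambda>x. \<xi> n x ^ 2)"
    using int[of 2 0] int[of 1 1] int[of 0 2] by simp
  also have "integral\<^sup>L M (\<lambda>x. S x * \<xi> n x) = 0" using orth[of n] by (simp add: S_def)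
  also have "integral\<^sup>L M (\<lambda>x. \<xi> n x ^ 2) \<le> integral\<^sup>L M (\<lambda>x. C\<^sup>2)"
    using int[of 0 2] bnd
    by (intro integral_mono_AE) (auto elim!: eventually_mono intro!: power_le_power_if_abs_le)
  finally show ?case using Suc by (simp add: S_def prob_space algebra_simps)
qed simp

lemma orthogonal_sum_fourth_moment:
  fixes \<xi> :: "nat \<Rightarrow> 'a \<Rightarrow> real"
  assumes meas: "\<And>n. \<xi> n \<in> borel_measurable M" and bnd: "AE x in M. \<forall>n. \<bar>\<xi> n x\<bar> \<le> C"
    and orth1: "\<And>n. integral\<^sup>L M (\<lambda>x. (\<Sum>u<n. \<xi> u x) * \<xi> n x) = 0"
    and orth3: "\<And>n. integral\<^sup>L M (\<lambda>x. (\<Sum>u<n. \<xi> u x) ^ 3 * \<xi> n x) = 0"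
  shows "integral\<^sup>L M (\<lambda>x. (\<Sum>u<n. \<xi> u x) ^ 4) \<le> 11 * C ^ 4 * (real n)\<^sup>2"
proof (induction n)
  case (Suc n)
  define S where "S x = (\<Sum>u<n. \<xi> u x)" for x
  note int = integrable_partial_sum_power_mult[OF meas bnd, of n, folded S_def]
  have C: "0 \<le> C" using bnd by (rule AE_bound_nonneg[OF AE_mp]) auto
  have S: "AE x in M. \<bar>S x\<bar> \<le> real n * C" using bnd
  proof eventually_elim
    case (elim x)
    have "\<bar>S x\<bar> \<le> (\<Sum>u<n. \<bar>\<xi> u x\<bar>)" unfolding S_def by (rule sum_abs)
    also have "\<dots> \<le> (\<Sum>u<n. C)" by (intro sum_mono) (use elim in auto)
    finally show ?case by simp
  qed
  have "integral\<^sup>L M (\<lambda>x. (\<Sum>u<Suc n. \<xi> u x) ^ 4) = integral\<^sup>L M (\<lambda>x.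
      S x ^ 4 * \<xi> n x ^ 0 + 4 * (S x ^ 3 * \<xi> n x ^ 1) + 6 * (S x ^ 2 * \<xi> n x ^ 2)
      + 4 * (S x ^ 1 * \<xi> n x ^ 3) + S x ^ 0 * \<xi> n x ^ 4)"
    by (rule Bochner_Integration.integral_cong)
       (simp_all add: S_def power2_eq_square power3_eq_cube power4_eq_xxxx algebra_simps)
  also have "\<dots> = integral\<^sup>L M (\<lambda>x. S x ^ 4) + 4 * integral\<^sup>L M (\<lambda>x. S x ^ 3 * \<xi> n x)
      + 6 * integral\<^sup>L M (\<lambda>x. S x ^ 2 * \<xi> n x ^ 2) + 4 * integral\<^sup>L M (\<lambda>x. S x * \<xi> n x ^ 3)
      + integral\<^sup>L M (\<lambda>x. \<xi> n x ^ 4)"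
    using int[of 4 0] int[of 3 1] int[of 2 2] int[of 1 3] int[of 0 4] by simp
  also have "integral\<^sup>L M (\<lambda>x. S x ^ 3 * \<xi> n x) = 0" using orth3[of n] by (simp add: S_def)
  also have "integral\<^sup>L M (\<lambda>x. S x ^ 2 * \<xi> n x ^ 2) \<le> integral\<^sup>L M (\<lambda>x. C\<^sup>2 * S x ^ 2)"
  proof (intro integral_mono_AE)
    show "AE x in M. S x ^ 2 * \<xi> n x ^ 2 \<le> C\<^sup>2 * S x ^ 2" using bnd
    proof eventually_elim
      case (elim x)
      have "\<xi> n x ^ 2 \<le> C ^ 2" using elim by (intro power_le_power_if_abs_le) auto
      then have "S x ^ 2 * \<xi> n x ^ 2 \<le> S x ^ 2 * C ^ 2" by (intro mult_left_mono) auto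
      then show ?case by (simp add: mult.commute)
    qed
  qed (use int[of 2 2] int[of 2 0] in simp_all)
  also have "\<dots> \<le> C\<^sup>2 * (real n * C\<^sup>2)"
    using orthogonal_sum_second_moment[OF meas bnd orth1, of n] by (simp add: S_def mult_left_mono)
  also have "integral\<^sup>L M (\<lambda>x. S x * \<xi> n x ^ 3) \<le> integral\<^sup>L M (\<lambda>x. real n * C * C ^ 3)"
  proof (intro integral_mono_AE)
    show "AE x in M. S x * \<xi> n x ^ 3 \<le> real n * C * C ^ 3" using S bnd
    proof eventually_elim
      case (elim x)
      then have "\<bar>S x * \<xi> n x ^ 3\<bar> \<le> real n * C * C ^ 3"
        using C unfolding abs_mult power_abs by (intro mult_mono power_mono) auto
      then show ?case by simp
    qed
  qed (use int[of 1 3] in simp_all)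
  also have "integral\<^sup>L M (\<lambda>x. \<xi> n x ^ 4) \<le> integral\<^sup>L M (\<lambda>x. C ^ 4)"
    using int[of 0 4] bnd
    by (intro integral_mono_AE) (auto elim!: eventually_mono intro!: power_le_power_if_abs_le)
  finally have "integral\<^sup>L M (\<lambda>x. (\<Sum>u<Suc n. \<xi> u x) ^ 4)
      \<le> integral\<^sup>L M (\<lambda>x. S x ^ 4) + (6 * (C\<^sup>2 * (real n * C\<^sup>2)) + 4 * (real n * C * C ^ 3)) + C ^ 4"
    by (simp add: prob_space)
  also have "6 * (C\<^sup>2 * (real n * C\<^sup>2)) + 4 * (real n * C * C ^ 3) = 10 * C ^ 4 * real n"
    by (simp add: power2_eq_square power3_eq_cube power4_eq_xxxx algebra_simps)
  finally have step: "integral\<^sup>L M (\<lambda>x. (\<Sum>u<Suc n. \<xi> u x) ^ 4)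
      \<le> integral\<^sup>L M (\<lambda>x. S x ^ 4) + 10 * C ^ 4 * real n + C ^ 4" .
  have "integral\<^sup>L M (\<lambda>x. S x ^ 4) \<le> 11 * C ^ 4 * (real n)\<^sup>2"
    using Suc.IH by (simp add: S_def)
  moreover have "11 * C ^ 4 * (real n)\<^sup>2 + 10 * C ^ 4 * real n + C ^ 4 \<le> 11 * C ^ 4 * (real (Suc n))\<^sup>2"
    using C by (simp add: power2_eq_square algebra_simps)
  ultimately show ?case using step by linarith
qed simp

lemma orthogonal_sum_strong_law:
  fixes \<xi> :: "nat \<Rightarrow> 'a \<Rightarrow> real"
  assumes meas: "\<And>n. \<xi> n \<in> borel_measurable M" and bnd: "AE x in M. \<forall>n. \<bar>\<xi> n x\<bar> \<le> C"
    and orth1: "\<And>n. integral\<^sup>L M (\<lambda>x. (\<Sum>u<n. \<xi> u x) * \<xi> n x) = 0"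
    and orth3: "\<And>n. integral\<^sup>L M (\<lambda>x. (\<Sum>u<n. \<xi> u x) ^ 3 * \<xi> n x) = 0"
  shows "AE x in M. (\<lambda>n. (\<Sum>u<n. \<xi> u x) / real n) \<longlonglongrightarrow> 0"
proof -
  define Z where "Z = (\<lambda>n x. ((\<Sum>u<n. \<xi> u x) / real n) ^ 4)"
  have int: "integrable M (Z n)" for n
    using integrable_partial_sum_power_mult[OF meas bnd, of n 4 0]
    unfolding Z_def power_divide by (intro integrable_divide) simp
  have EZ: "integral\<^sup>L M (Z n) \<le> 11 * C ^ 4 * inverse ((real n)\<^sup>2)" for n
  proof (cases "n = 0")
    case False
    have "integral\<^sup>L M (Z n) = integral\<^sup>L M (\<lambda>x. (\<Sum>u<n. \<xi> u x) ^ 4) / real n ^ 4"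
      by (simp add: Z_def power_divide)
    also have "\<dots> \<le> 11 * C ^ 4 * (real n)\<^sup>2 / real n ^ 4"
      by (intro divide_right_mono orthogonal_sum_fourth_moment[OF meas bnd orth1 orth3]) simp
    also have "\<dots> = 11 * C ^ 4 * inverse ((real n)\<^sup>2)"
      using False by (simp add: field_simps power2_eq_square power4_eq_xxxx)
    finally show ?thesis .
  qed (simp add: Z_def)
  have "summable (\<lambda>n. 11 * C ^ 4 * inverse ((real n)\<^sup>2))"
    by (intro summable_mult inverse_power_summable) simp
  then have "summable (\<lambda>n. integral\<^sup>L M (Z n))"
    by (rule summable_comparison_test') (use EZ in \<open>simp add: Z_def\<close>)
  then have "AE x in M. (\<lambda>n. Z n x) \<longlonglongrightarrow> 0"
    by (intro AE_tendsto_zero_if_summable_integral int) (simp add: Z_def)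
  then show ?thesis
  proof eventually_elim
    case (elim x)
    then have "(\<lambda>n. root 4 (Z n x)) \<longlonglongrightarrow> root 4 0" by (intro tendsto_real_root) auto
    moreover have "root 4 (Z n x) = \<bar>(\<Sum>u<n. \<xi> u x) / real n\<bar>" for n
    proof -
      have "Z n x = \<bar>(\<Sum>u<n. \<xi> u x) / real n\<bar> ^ 4" by (simp add: Z_def power_divide power_even_abs)
      then show ?thesis by (simp add: real_root_power_cancel)
    qed
    ultimately have "(\<lambda>n. \<bar>(\<Sum>u<n. \<xi> u x) / real n\<bar>) \<longlonglongrightarrow> 0" by simp
    then show ?case by (rule tendsto_rabs_zero_cancel)
  qed
qed

lemma integral_mult_eq_cond_exp_const:
  fixes h f :: "'a \<Rightarrow> real"
  assumes F: "sigma_finite_subalgebra M F"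
    and h: "h \<in> borel_measurable F" "AE x in M. \<bar>h x\<bar> \<le> Bh"
    and f: "f \<in> borel_measurable M" "AE x in M. \<bar>f x\<bar> \<le> Bf"
    and cond_exp: "AE x in M. real_cond_exp M F f x = c"
  shows "integral\<^sup>L M (\<lambda>x. h x * f x) = c * integral\<^sup>L M h"
proof -
  have [measurable]: "h \<in> borel_measurable M"
    using measurable_from_subalg[OF sigma_finite_subalgebra.subalg[OF F] h(1)] .
  have "AE x in M. norm (h x * f x) \<le> Bh * Bf"
    using h(2) f(2) by eventually_elim (auto simp: abs_mult intro!: mult_mono)
  then have "integrable M (\<lambda>x. h x * f x)"
    by (rule integrable_const_bound) (use f(1) in measurable)
  then have "integral\<^sup>L M (\<lambda>x. h x * f x) = integral\<^sup>L M (\<lambda>x. h x * real_cond_exp M F f x)"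
    using sigma_finite_subalgebra.real_cond_exp_intg(2)[OF F _ h(1) f(1)] by simp
  also have "\<dots> = integral\<^sup>L M (\<lambda>x. h x * c)"
    by (rule integral_cong_AE) (use cond_exp in auto)
  finally show ?thesis by simp
qed

lemma predictable_strong_law:
  fixes F :: "int \<Rightarrow> 'a measure" and \<tau> :: "nat \<Rightarrow> int"
    and \<zeta> :: "int \<Rightarrow> 'a \<Rightarrow> real" and g :: "nat \<Rightarrow> 'a \<Rightarrow> real"
  assumes F: "\<And>t. subalgebra M (F t)"
    and F_mono: "\<And>s t (f :: 'a \<Rightarrow> real). s \<le> t \<Longrightarrow> f \<in> borel_measurable (F s) \<Longrightarrow> f \<in> borel_measurable (F t)"
    and \<tau>: "strict_mono \<tau>"
    and \<zeta>_meas: "\<And>t. \<zeta> t \<in> borel_measurable (F t)" and \<zeta>_bnd: "AE x in M. \<forall>t. \<bar>\<zeta> t x\<bar> \<le> B"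
    and \<zeta>_orth: "\<And>t h Bh. h \<in> borel_measurable (F (t - 1)) \<Longrightarrow> (AE x in M. \<bar>h x\<bar> \<le> Bh)
              \<Longrightarrow> integral\<^sup>L M (\<lambda>x. h x * \<zeta> t x) = 0"
    and g_meas: "\<And>n. g n \<in> borel_measurable (F (\<tau> n - 1))" and g_bnd: "AE x in M. \<forall>n. \<bar>g n x\<bar> \<le> Bg"
  shows "AE x in M. (\<lambda>n. (\<Sum>u<n. g u x * \<zeta> (\<tau> u) x) / real n) \<longlonglongrightarrow> 0"
proof -
  define \<xi> where "\<xi> u x = g u x * \<zeta> (\<tau> u) x" for u x
  have \<xi>_meas: "\<xi> u \<in> borel_measurable (F (\<tau> n - 1))" if "u < n" for u n
  proof -
    have "g u \<in> borel_measurable (F (\<tau> u))" using F_mono[OF _ g_meas] by simp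
    then have "\<xi> u \<in> borel_measurable (F (\<tau> u))" unfolding \<xi>_def using \<zeta>_meas by measurable
    moreover have "\<tau> u \<le> \<tau> n - 1" using \<tau> that by (simp add: strict_mono_less)
    ultimately show ?thesis by (rule F_mono[rotated])
  qed
  have \<xi>_bnd: "AE x in M. \<forall>u. \<bar>\<xi> u x\<bar> \<le> Bg * B"
    using g_bnd \<zeta>_bnd by eventually_elim (auto simp: \<xi>_def abs_mult intro!: mult_mono)
  have S_bnd: "AE x in M. \<bar>\<Sum>u<n. \<xi> u x\<bar> \<le> real n * (Bg * B)" for n
    using \<xi>_bnd
  proof eventually_elim
    case (elim x)
    have "\<bar>\<Sum>u<n. \<xi> u x\<bar> \<le> (\<Sum>u<n. \<bar>\<xi> u x\<bar>)" by (rule sum_abs)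
    also have "\<dots> \<le> (\<Sum>u<n. Bg * B)" by (intro sum_mono) (use elim in auto)
    finally show ?case by simp
  qed
  have orth: "integral\<^sup>L M (\<lambda>x. (\<Sum>u<n. \<xi> u x) ^ k * \<xi> n x) = 0" for n k
  proof -
    have "(\<lambda>x. (\<Sum>u<n. \<xi> u x) ^ k * g n x) \<in> borel_measurable (F (\<tau> n - 1))"
      by (intro borel_measurable_times borel_measurable_power borel_measurable_sum \<xi>_meas g_meas) simp
    moreover have "AE x in M. \<bar>(\<Sum>u<n. \<xi> u x) ^ k * g n x\<bar> \<le> (real n * (Bg * B)) ^ k * Bg"
      using S_bnd[of n] g_bnd
      by eventually_elim (auto simp: abs_mult power_abs intro!: mult_mono power_mono)
    ultimately have "integral\<^sup>L M (\<lambda>x. ((\<Sum>u<n. \<xi> u x) ^ k * g n x) * \<zeta> (\<tau> n) x) = 0"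
      by (rule \<zeta>_orth)
    then show ?thesis by (simp add: \<xi>_def mult.assoc)
  qed
  have "\<xi> u \<in> borel_measurable M" for u
    using measurable_from_subalg[OF F \<xi>_meas[of u "Suc u"]] by simp
  from orthogonal_sum_strong_law[OF this \<xi>_bnd orth[of _ 1, unfolded power_one_right] orth] show ?thesis
    unfolding \<xi>_def .
qed

end

definition nat_filt_generators :: "'a measure \<Rightarrow> (int \<Rightarrow> 'a \<Rightarrow> real) \<Rightarrow> int \<Rightarrow> 'a set set" where
  "nat_filt_generators M y t = {y s -` A \<inter> space M | s A. s \<le> t \<and> A \<in> sets borel}"

lemma space_nat_filt [simp]: "space (nat_filt M y t) = space M"
  unfolding nat_filt_def by (simp add: space_measure_of_conv)

lemma sets_nat_filt: "sets (nat_filt M y t) = sigma_sets (space M) (nat_filt_generators M y t)"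
  unfolding nat_filt_def nat_filt_generators_def[symmetric]
  by (rule sets_measure_of) (auto simp: nat_filt_generators_def)

lemma subalgebra_nat_filt:
  assumes "\<And>t. y t \<in> borel_measurable M"
  shows "subalgebra M (nat_filt M y t)"
proof -
  have "nat_filt_generators M y t \<subseteq> sets M"
    using assms by (auto simp: nat_filt_generators_def intro: measurable_sets)
  then show ?thesis
    unfolding subalgebra_def sets_nat_filt by (simp add: sets.sigma_sets_subset)
qed

lemma sigma_finite_subalgebra_nat_filt:
  assumes "prob_space M" and "\<And>t. y t \<in> borel_measurable M"
  shows "sigma_finite_subalgebra M (nat_filt M y t)"
proof -
  interpret prob_space M by fact
  show ?thesis
    by (intro finite_measure_subalgebra_is_sigma_finite)
       (simp add: finite_measure_subalgebra_def finite_measure_subalgebra_axioms_def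
         subalgebra_nat_filt[OF assms(2)] finite_measure_axioms)
qed

lemma measurable_nat_filt_mono:
  assumes "s \<le> t" and "f \<in> borel_measurable (nat_filt M y s)"
  shows "f \<in> borel_measurable (nat_filt M y t)"
proof -
  have "nat_filt_generators M y s \<subseteq> nat_filt_generators M y t"
    using assms(1) by (fastforce simp: nat_filt_generators_def)
  then have "sets (nat_filt M y s) \<subseteq> sets (nat_filt M y t)"
    unfolding sets_nat_filt by (rule sigma_sets_mono')
  with assms(2) show ?thesis unfolding measurable_def by auto
qed

lemma measurable_nat_filt_y:
  assumes "s \<le> t"
  shows "y s \<in> borel_measurable (nat_filt M y t)"
proof (rule measurableI)
  fix A :: "real set" assume "A \<in> sets borel"
  then have "y s -` A \<inter> space M \<in> nat_filt_generators M y t"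
    using assms by (auto simp: nat_filt_generators_def)
  then show "y s -` A \<inter> space (nat_filt M y t) \<in> sets (nat_filt M y t)"
    unfolding sets_nat_filt by auto
qed simp

lemma measurable_alg_nat_filt:
  fixes y :: "int \<Rightarrow> 'a \<Rightarrow> real"
  shows "(\<lambda>x. alg_theta \<beta> (\<lambda>n. y (int n) x) t) \<in> borel_measurable (nat_filt M y (int t)) \<and>
    (\<lambda>x. alg_e \<beta> (\<lambda>n. y (int n) x) t) \<in> borel_measurable (nat_filt M y (int t)) \<and>
    (\<lambda>x. alg_x \<beta> (\<lambda>n. y (int n) x) t) \<in> borel_measurable (nat_filt M y (int t)) \<and>
    (\<lambda>x. alg_phi \<beta> (\<lambda>n. y (int n) x) t) \<in> borel_measurable (nat_filt M y (int t)) \<and>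
    (\<lambda>x. alg_S \<beta> (\<lambda>n. y (int n) x) t) \<in> borel_measurable (nat_filt M y (int t))"
proof (induction t)
  case (Suc n)
  show ?case
  proof (cases "n = 0")
    case True
    then show ?thesis using measurable_nat_filt_y[of 1 "int (Suc n)" y M] by (simp add: alg_one)
  next
    case False
    then have "1 \<le> n" by simp
    let ?F = "nat_filt M y (int (Suc n))"
    have le: "int n \<le> int (Suc n)" by simp
    have "(\<lambda>x. alg_theta \<beta> (\<lambda>n. y (int n) x) n) \<in> borel_measurable ?F"
      "(\<lambda>x. alg_e \<beta> (\<lambda>n. y (int n) x) n) \<in> borel_measurable ?F"
      "(\<lambda>x. alg_x \<beta> (\<lambda>n. y (int n) x) n) \<in> borel_measurable ?F"
      "(\<lambda>x. alg_phi \<beta> (\<lambda>n. y (int n) x) n) \<in> borel_measurable ?F"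
      "(\<lambda>x. alg_S \<beta> (\<lambda>n. y (int n) x) n) \<in> borel_measurable ?F"
      using Suc.IH measurable_nat_filt_mono[OF le] by blast+
    moreover have "y (int (Suc n)) \<in> borel_measurable ?F"
      by (rule measurable_nat_filt_y) simp
    ultimately show ?thesis
      unfolding alg_step[OF \<open>1 \<le> n\<close>] by (intro conjI; measurable)
  qed
qed (simp add: alg_zero)

lemma measurable_kappa_phi_nat_filt:
  fixes y :: "int \<Rightarrow> 'a \<Rightarrow> real"
  shows "(\<lambda>x. kappa_phi \<kappa> \<beta> (alg_theta \<beta> (\<lambda>n. y (int n) x)) t j)
           \<in> borel_measurable (nat_filt M y (int t - 1))"
proof (induction t arbitrary: j)
  case (Suc t)
  show ?case
  proof (cases "t = 0")
    case False
    let ?F = "nat_filt M y (int (Suc t) - 1)"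
    have \<theta>: "(\<lambda>x. alg_theta \<beta> (\<lambda>n. y (int n) x) (Suc t - i)) \<in> borel_measurable ?F" if "1 \<le> i" for i
      by (rule measurable_nat_filt_mono[OF _ measurable_alg_nat_filt[THEN conjunct1]])
         (use that in \<open>cases "i \<le> Suc t"; auto simp: of_nat_diff\<close>)
    have "(\<lambda>x. kappa_x \<kappa> \<beta> (alg_theta \<beta> (\<lambda>n. y (int n) x)) (Suc t) j) \<in> borel_measurable ?F"
      unfolding kappa_x_def by (intro borel_measurable_sum borel_measurable_times
          borel_measurable_prod borel_measurable_const \<theta>) auto
    moreover have "(\<lambda>x. kappa_phi \<kappa> \<beta> (alg_theta \<beta> (\<lambda>n. y (int n) x)) t (j - 1)) \<in> borel_measurable ?F"
      by (rule measurable_nat_filt_mono[OF _ Suc.IH]) simp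
    moreover have "(\<lambda>x. alg_theta \<beta> (\<lambda>n. y (int n) x) t) \<in> borel_measurable ?F"
      using \<theta>[of 1] by simp
    ultimately show ?thesis
      using False
      by (cases "j = 0") (auto simp: kappa_phi_eq intro!: borel_measurable_diff borel_measurable_times)
  qed simp
qed simp

text \<open>
  Truncation makes pathwise bounded predictable weights uniformly bounded, as the strong law
  requires; on each path it is inactive once the level exceeds the path's bound.
\<close>

definition clip :: "real \<Rightarrow> real \<Rightarrow> real" where
  "clip B z = max (- B) (min B z)"

lemma abs_clip_le: "0 \<le> B \<Longrightarrow> \<bar>clip B z\<bar> \<le> B"
  unfolding clip_def by auto

lemma clip_eq: "\<bar>z\<bar> \<le> B \<Longrightarrow> clip B z = z"
  unfolding clip_def by auto

lemma borel_measurable_clip [measurable]: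
  "f \<in> borel_measurable N \<Longrightarrow> (\<lambda>x. clip B (f x)) \<in> borel_measurable N"
  unfolding clip_def by (intro borel_measurable_max borel_measurable_min measurable_const) auto

lemma if_mult_zero: "(if P then 0 else a) * b = (if P then 0 else a * (b::real))"
  by simp

lemma sum_lessThan_skip_zero:
  fixes n :: nat and f :: "nat \<Rightarrow> 'a::comm_monoid_add"
  shows "(\<Sum>u<n. if u = 0 then 0 else f u) = (\<Sum>u = 1..<n. f u)"
  by (induction n) (auto simp: atLeastLessThanSuc add.commute)

lemma mean_lessThan_imp_atMost_tendsto_zero:
  fixes a :: "nat \<Rightarrow> real"
  assumes "(\<lambda>n. (\<Sum>u<n. a u) / real n) \<longlonglongrightarrow> 0"
  shows "(\<lambda>t. (1 / real t) * (\<Sum>u\<le>t. a u)) \<longlonglongrightarrow> 0"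
proof -
  have "(\<lambda>t. (\<Sum>u\<le>t. a u) / real (Suc t)) \<longlonglongrightarrow> 0"
    using LIMSEQ_Suc[OF assms] by (simp add: lessThan_Suc_atMost)
  then have "(\<lambda>t. (real (Suc t) / real t) * ((\<Sum>u\<le>t. a u) / real (Suc t))) \<longlonglongrightarrow> 1 * 0"
    by (intro tendsto_mult LIMSEQ_Suc_n_over_n)
  moreover have "(real (Suc t) / real t) * ((\<Sum>u\<le>t. a u) / real (Suc t))
      = (1 / real t) * (\<Sum>u\<le>t. a u)" for t
    by (cases "t = 0") (simp_all add: field_simps del: of_nat_Suc)
  ultimately show ?thesis by simp
qed

locale linear_process_algorithm =
  fixes M :: "'a measure"
    and y \<epsilon> :: "int \<Rightarrow> 'a \<Rightarrow> real"
    and \<kappa> :: "nat \<Rightarrow> real"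
    and \<sigma>2 K \<beta> :: real
    and kstar :: "'a \<Rightarrow> nat" and Kstar :: "'a \<Rightarrow> real"
  assumes prob: "prob_space M"
    and y_rv: "\<And>t. y t \<in> borel_measurable M"
    and D1: "measure M {x \<in> space M. (y 1 x)\<^sup>2 > 0} = 1"
    and D2_k0: "\<kappa> 0 = 1"
    and D2_abs: "summable (\<lambda>s. \<bar>\<kappa> s\<bar>)"
    and D2_rep: "AE x in M. \<forall>t. (\<lambda>s. \<kappa> s * \<epsilon> (t - int s) x) sums y t x"
    and mds_meas: "\<And>t. \<epsilon> t \<in> borel_measurable (nat_filt M y t)"
    and mds: "\<And>t. AE x in M. real_cond_exp M (nat_filt M y (t - 1)) (\<epsilon> t) x = 0"
    and D3: "\<And>t. AE x in M. real_cond_exp M (nat_filt M y (t - 1)) (\<lambda>x. (\<epsilon> t x)\<^sup>2) x = \<sigma>2"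
    and D4: "AE x in M. \<forall>t. \<bar>\<epsilon> t x\<bar> \<le> K"
    and beta: "0 \<le> \<beta>" "\<beta> \<le> 1"
    and Kstar_lt_1: "AE x in M. Kstar x < 1"
    and theta_bd: "AE x in M. \<forall>t\<ge>1. \<bar>alg_theta \<beta> (\<lambda>n. y (int n) x) (t + kstar x)\<bar> \<le> Kstar x"
begin

sublocale prob_space M by (rule prob)

abbreviation F :: "int \<Rightarrow> 'a measure" where
  "F \<equiv> nat_filt M y"

abbreviation ypath :: "'a \<Rightarrow> nat \<Rightarrow> real" where
  "ypath x \<equiv> \<lambda>n. y (int n) x"

lemma eps_measurable [measurable]: "\<epsilon> t \<in> borel_measurable M"
  by (rule measurable_from_subalg[OF subalgebra_nat_filt[OF y_rv] mds_meas])

lemma AE_abs_eps_le: "AE x in M. \<bar>\<epsilon> t x\<bar> \<le> K"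
  using D4 by eventually_elim blast

lemma AE_eps_sq_le: "AE x in M. \<bar>(\<epsilon> t x)\<^sup>2\<bar> \<le> K\<^sup>2"
  using AE_abs_eps_le[of t] by eventually_elim (simp add: power_le_power_if_abs_le)

lemma integral_mult_eps:
  assumes "h \<in> borel_measurable (F (t - 1))" and "AE x in M. \<bar>h x\<bar> \<le> Bh"
  shows "integral\<^sup>L M (\<lambda>x. h x * \<epsilon> t x) = 0"
  using integral_mult_eq_cond_exp_const[OF sigma_finite_subalgebra_nat_filt[OF prob y_rv]
      assms eps_measurable AE_abs_eps_le mds] by simp

lemma integral_mult_eps_sq:
  assumes "h \<in> borel_measurable (F (t - 1))" and "AE x in M. \<bar>h x\<bar> \<le> Bh"
  shows "integral\<^sup>L M (\<lambda>x. h x * (\<epsilon> t x)\<^sup>2) = \<sigma>2 * integral\<^sup>L M h"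
  by (rule integral_mult_eq_cond_exp_const[OF sigma_finite_subalgebra_nat_filt[OF prob y_rv]
      assms _ AE_eps_sq_le D3]) measurable

lemma integral_mult_centered_eps_sq:
  assumes h: "h \<in> borel_measurable (F (t - 1))" and h_bnd: "AE x in M. \<bar>h x\<bar> \<le> Bh"
  shows "integral\<^sup>L M (\<lambda>x. h x * ((\<epsilon> t x)\<^sup>2 - \<sigma>2)) = 0"
proof -
  have [measurable]: "h \<in> borel_measurable M"
    by (rule measurable_from_subalg[OF subalgebra_nat_filt[OF y_rv] h])
  have "integrable M h" by (rule integrable_const_bound[where B = Bh]) (use h_bnd in auto)
  moreover have "integrable M (\<lambda>x. h x * (\<epsilon> t x)\<^sup>2)"
  proof (rule integrable_const_bound[where B = "Bh * K\<^sup>2"])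
    show "AE x in M. norm (h x * (\<epsilon> t x)\<^sup>2) \<le> Bh * K\<^sup>2"
      using h_bnd AE_eps_sq_le by eventually_elim (auto simp: abs_mult intro!: mult_mono)
  qed measurable
  ultimately show ?thesis
    using integral_mult_eps_sq[OF assms] by (simp add: right_diff_distrib)
qed

lemma sigma2_pos: "0 < \<sigma>2"
proof (rule ccontr)
  assume "\<not> 0 < \<sigma>2"
  have "AE x in M. (\<epsilon> t x)\<^sup>2 = 0" for t
  proof -
    have int: "integrable M (\<lambda>x. (\<epsilon> t x)\<^sup>2)"
      by (rule integrable_const_bound[where B = "K\<^sup>2"]) (use AE_eps_sq_le in auto)
    have "integral\<^sup>L M (\<lambda>x. 1 * (\<epsilon> t x)\<^sup>2) = \<sigma>2 * integral\<^sup>L M (\<lambda>x. 1)"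
      by (rule integral_mult_eps_sq[where Bh = 1]) auto
    then have "integral\<^sup>L M (\<lambda>x. (\<epsilon> t x)\<^sup>2) = 0"
      using \<open>\<not> 0 < \<sigma>2\<close> integral_nonneg_AE[of "\<lambda>x. (\<epsilon> t x)\<^sup>2" M] by (simp add: prob_space)
    then show ?thesis using integral_nonneg_eq_0_iff_AE[OF int] by simp
  qed
  then have "AE x in M. \<forall>t. (\<epsilon> t x)\<^sup>2 = 0" by (subst AE_all_countable) auto
  then have "AE x in M. y 1 x = 0" using D2_rep
  proof eventually_elim
    case (elim x)
    then have "(\<lambda>s. 0 :: real) sums y 1 x" using elim(2) by simp
    then show ?case using sums_unique sums_zero by metis
  qed
  then have "AE x in M. x \<notin> {x \<in> space M. (y 1 x)\<^sup>2 > 0}" by eventually_elim auto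
  moreover have "{x \<in> space M. (y 1 x)\<^sup>2 > 0} \<in> sets M" using y_rv[of 1] by measurable
  ultimately have "{x \<in> space M. (y 1 x)\<^sup>2 > 0} \<in> null_sets M"
    by (simp add: AE_iff_null_sets)
  then have "measure M {x \<in> space M. (y 1 x)\<^sup>2 > 0} = 0" by (simp add: measure_eq_0_null_sets)
  then show False using D1 by simp
qed

text \<open>
  phi_u - eps_u, written so that it is visibly F_(u-1)-measurable: by (D2),
  y_u - eps_u = sum_k kappa_(k+1) eps_(u-1-k).
\<close>

definition phi_pred :: "nat \<Rightarrow> 'a \<Rightarrow> real" where
  "phi_pred u x = alg_phi \<beta> (ypath x) u - y (int u) x + (\<Sum>k. \<kappa> (Suc k) * \<epsilon> (int u - 1 - int k) x)"

lemma measurable_phi_pred: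
  assumes "1 \<le> u"
  shows "phi_pred u \<in> borel_measurable (F (int u - 1))"
proof -
  have "\<epsilon> (int u - 1 - int k) \<in> borel_measurable (F (int u - 1))" for k
    by (rule measurable_nat_filt_mono[OF _ mds_meas]) simp
  then have "(\<lambda>x. \<Sum>k. \<kappa> (Suc k) * \<epsilon> (int u - 1 - int k) x) \<in> borel_measurable (F (int u - 1))"
    by measurable
  moreover have "(\<lambda>x. alg_phi \<beta> (ypath x) u - y (int u) x) \<in> borel_measurable (F (int u - 1))"
  proof (cases "u = 1")
    case True
    then show ?thesis by (simp add: alg_one One_nat_def)
  next
    case False
    then obtain n where u: "u = Suc n" and "1 \<le> n" using assms by (cases u) auto
    then have eq: "(\<lambda>x. alg_phi \<beta> (ypath x) u - y (int u) x) = (\<lambda>x.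
        - \<beta> * alg_theta \<beta> (ypath x) n * alg_x \<beta> (ypath x) n
        - alg_theta \<beta> (ypath x) n * alg_phi \<beta> (ypath x) n)"
      by (simp add: alg_step fun_eq_iff)
    have idx: "int u - 1 = int n" using u by simp
    have "(\<lambda>x. alg_theta \<beta> (ypath x) n) \<in> borel_measurable (F (int n))"
      "(\<lambda>x. alg_x \<beta> (ypath x) n) \<in> borel_measurable (F (int n))"
      "(\<lambda>x. alg_phi \<beta> (ypath x) n) \<in> borel_measurable (F (int n))"
      using measurable_alg_nat_filt[of \<beta> y n M] by blast+
    then show ?thesis unfolding eq idx by measurable
  qed
  ultimately show ?thesis unfolding phi_pred_def by measurable
qed

lemma alg_phi_eq_eps_add_phi_pred:
  assumes "(\<lambda>s. \<kappa> s * \<epsilon> (int u - int s) x) sums y (int u) x"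
  shows "alg_phi \<beta> (ypath x) u = \<epsilon> (int u) x + phi_pred u x"
proof -
  have "(\<lambda>k. \<kappa> (Suc k) * \<epsilon> (int u - int (Suc k)) x) sums (y (int u) x - \<kappa> 0 * \<epsilon> (int u) x)"
    using assms by (subst sums_Suc_iff) simp
  then have "(\<lambda>k. \<kappa> (Suc k) * \<epsilon> (int u - 1 - int k) x) sums (y (int u) x - \<epsilon> (int u) x)"
    by (simp add: D2_k0 algebra_simps)
  then show ?thesis unfolding phi_pred_def by (simp add: sums_unique[symmetric])
qed

lemma AE_mean_centered_eps_sq:
  "AE x in M. (\<lambda>n. (\<Sum>u = 1..<n. (\<epsilon> (int u) x)\<^sup>2 - \<sigma>2) / real n) \<longlonglongrightarrow> 0"
proof -
  have "AE x in M. (\<lambda>n. (\<Sum>u<n. (if u = 0 then 0 else 1) * ((\<epsilon> (int u) x)\<^sup>2 - \<sigma>2)) / real n) \<longlonglongrightarrow> 0"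
  proof (rule predictable_strong_law[where F = F and \<tau> = int and B = "K\<^sup>2 + \<bar>\<sigma>2\<bar>" and Bg = 1
        and \<zeta> = "\<lambda>t x. (\<epsilon> t x)\<^sup>2 - \<sigma>2" and g = "\<lambda>u x. if u = 0 then 0 else 1"])
    show "(\<lambda>x. (\<epsilon> t x)\<^sup>2 - \<sigma>2) \<in> borel_measurable (F t)" for t
      using mds_meas[of t] by measurable
    show "AE x in M. \<forall>t. \<bar>(\<epsilon> t x)\<^sup>2 - \<sigma>2\<bar> \<le> K\<^sup>2 + \<bar>\<sigma>2\<bar>"
      using D4
    proof eventually_elim
      case (elim x)
      show ?case
      proof
        fix t
        have "(\<epsilon> t x)\<^sup>2 \<le> K\<^sup>2" using elim by (intro power_le_power_if_abs_le) auto
        then show "\<bar>(\<epsilon> t x)\<^sup>2 - \<sigma>2\<bar> \<le> K\<^sup>2 + \<bar>\<sigma>2\<bar>"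
          unfolding abs_le_iff
          using zero_le_power2[of "\<epsilon> t x"] abs_ge_self[of \<sigma>2] abs_ge_minus_self[of \<sigma>2] by linarith
      qed
    qed
  qed (auto simp: strict_mono_def subalgebra_nat_filt[OF y_rv] intro: measurable_nat_filt_mono
      integral_mult_centered_eps_sq)
  then show ?thesis by (simp only: if_mult_zero sum_lessThan_skip_zero mult_1)
qed

lemma AE_mean_clip_phi_pred_eps:
  "AE x in M. \<forall>m::nat. (\<lambda>n. (\<Sum>u = 1..<n. clip (real m) (phi_pred u x) * \<epsilon> (int u) x) / real n) \<longlonglongrightarrow> 0"
proof -
  have "AE x in M. (\<lambda>n.
      (\<Sum>u<n. (if u = 0 then 0 else clip (real m) (phi_pred u x)) * \<epsilon> (int u) x) / real n)
      \<longlonglongrightarrow> 0" for m :: nat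
  proof (rule predictable_strong_law[where F = F and \<tau> = int and B = K and Bg = "real m"
        and \<zeta> = \<epsilon> and g = "\<lambda>u x. if u = 0 then 0 else clip (real m) (phi_pred u x)"])
    show "(\<lambda>x. if u = 0 then 0 else clip (real m) (phi_pred u x))
        \<in> borel_measurable (F (int u - 1))" for u
      using measurable_phi_pred[of u] by (cases "u = 0") auto
  qed (auto simp: strict_mono_def subalgebra_nat_filt[OF y_rv] abs_clip_le D4 mds_meas
      intro: measurable_nat_filt_mono integral_mult_eps)
  then have "\<forall>m::nat. AE x in M.
      (\<lambda>n. (\<Sum>u = 1..<n. clip (real m) (phi_pred u x) * \<epsilon> (int u) x) / real n) \<longlonglongrightarrow> 0"
    by (simp only: if_mult_zero sum_lessThan_skip_zero simp_thms)
  then show ?thesis by (subst AE_all_countable)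
qed

definition good_path :: "'a \<Rightarrow> bool" where
  "good_path x \<longleftrightarrow> (\<forall>t. \<bar>\<epsilon> t x\<bar> \<le> K) \<and> (\<forall>t. (\<lambda>s. \<kappa> s * \<epsilon> (t - int s) x) sums y t x)
     \<and> Kstar x < 1 \<and> (\<forall>t\<ge>1. \<bar>alg_theta \<beta> (ypath x) (t + kstar x)\<bar> \<le> Kstar x)
     \<and> (\<lambda>n. (\<Sum>u = 1..<n. (\<epsilon> (int u) x)\<^sup>2 - \<sigma>2) / real n) \<longlonglongrightarrow> 0
     \<and> (\<forall>m::nat. (\<lambda>n. (\<Sum>u = 1..<n. clip (real m) (phi_pred u x) * \<epsilon> (int u) x) / real n) \<longlonglongrightarrow> 0)"

lemma AE_good_path: "AE x in M. good_path x"
  using D4 D2_rep Kstar_lt_1 theta_bd AE_mean_centered_eps_sq AE_mean_clip_phi_pred_eps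
  unfolding good_path_def by eventually_elim auto

lemma good_path_theta:
  assumes "good_path x"
  shows "theta_incr \<beta> (ypath x) \<longlonglongrightarrow> 0" and "slowly_varying (alg_theta \<beta> (ypath x))"
proof -
  have eps: "\<And>t. \<bar>\<epsilon> t x\<bar> \<le> K" and rep: "\<And>t. (\<lambda>s. \<kappa> s * \<epsilon> (t - int s) x) sums y t x"
    and "Kstar x < 1" and \<theta>_bd: "\<forall>t\<ge>1. \<bar>alg_theta \<beta> (ypath x) (t + kstar x)\<bar> \<le> Kstar x"
    and mean_sq: "(\<lambda>n. (\<Sum>u = 1..<n. (\<epsilon> (int u) x)\<^sup>2 - \<sigma>2) / real n) \<longlonglongrightarrow> 0"
    and mean_clip: "\<And>m::nat. (\<lambda>n. (\<Sum>u = 1..<n. clip (real m) (phi_pred u x) * \<epsilon> (int u) x) / real n) \<longlonglongrightarrow> 0"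
    using assms unfolding good_path_def by auto
  have \<theta>: "\<bar>alg_theta \<beta> (ypath x) n\<bar> \<le> Kstar x" if "Suc (kstar x) \<le> n" for n
    using \<theta>_bd[rule_format, of "n - kstar x"] that by simp
  have "\<bar>ypath x n\<bar> \<le> K * (\<Sum>s. \<bar>\<kappa> s\<bar>)" for n by (rule abs_sums_le[OF rep eps D2_abs])
  from Bseq_alg_e_x_phi[OF this \<theta> \<open>Kstar x < 1\<close> beta]
  have e: "Bseq (alg_e \<beta> (ypath x))" and \<phi>: "Bseq (alg_phi \<beta> (ypath x))" by auto
  then obtain B where B: "\<And>n. \<bar>alg_phi \<beta> (ypath x) n\<bar> \<le> B" unfolding Bseq_def by auto
  have \<phi>_eq: "alg_phi \<beta> (ypath x) u = \<epsilon> (int u) x + phi_pred u x" for u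
    by (rule alg_phi_eq_eps_add_phi_pred[OF rep])
  define m where "m = nat \<lceil>B + \<bar>K\<bar>\<rceil>"
  have "clip (real m) (phi_pred u x) = phi_pred u x" for u
  proof (rule clip_eq)
    have "\<bar>phi_pred u x\<bar> \<le> B + \<bar>K\<bar>"
      using B[of u] eps[of "int u"] \<phi>_eq[of u] by (simp add: abs_le_iff)
    then show "\<bar>phi_pred u x\<bar> \<le> real m" unfolding m_def by linarith
  qed
  with mean_clip[of m]
  have "(\<lambda>n. (\<Sum>u = 1..<n. phi_pred u x * \<epsilon> (int u) x) / real n) \<longlonglongrightarrow> 0" by simp
  from inverse_alg_S_tendsto_zero[OF \<phi>_eq mean_sq this sigma2_pos]
  show incr: "theta_incr \<beta> (ypath x) \<longlonglongrightarrow> 0" by (rule theta_incr_tendsto_zero[OF \<phi> e])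
  show "slowly_varying (alg_theta \<beta> (ypath x))" by (rule slowly_varying_alg_theta[OF \<theta> incr])
qed

lemma good_path_Bseq_eps:
  assumes "good_path x"
  shows "Bseq (\<lambda>s. \<epsilon> (f s) x)" and "Bseq (\<lambda>s. (\<epsilon> (f s) x)\<^sup>2)"
proof -
  have eps: "\<bar>\<epsilon> t x\<bar> \<le> K" for t using assms unfolding good_path_def by auto
  then show "Bseq (\<lambda>s. \<epsilon> (f s) x)" by (intro BseqI'[where K = K]) simp
  show "Bseq (\<lambda>s. (\<epsilon> (f s) x)\<^sup>2)"
    by (intro BseqI'[where K = "K\<^sup>2"]) (simp add: eps power_le_power_if_abs_le)
qed

lemma AE_cesaro_increment_terms:
  fixes kt :: "nat \<Rightarrow> nat \<Rightarrow> 'a \<Rightarrow> real" and ktb :: "nat \<Rightarrow> 'a \<Rightarrow> real"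
  assumes kt: "AE x in M. \<forall>j t. t \<ge> 1 \<longrightarrow> \<bar>kt j t x\<bar> \<le> ktb j x" and p: "p \<ge> 1"
  shows
  "(AE x in M. (\<lambda>t. (1 / real t) * (\<Sum>s = 2..t.
             (\<Sum>l = 1..min j (s - 1). kt (j - l) s x *
                (\<Prod>i = 1..l. (1 / real (s - i))
                    * inverse (alg_Pbar \<beta> (\<lambda>n. y (int n) x) (s - i))
                    * alg_phi \<beta> (\<lambda>n. y (int n) x) (s - i - 1)
                    * alg_e \<beta> (\<lambda>n. y (int n) x) (s - i))) ^ p))
             \<longlonglongrightarrow> 0) \<and>
   (AE x in M. (\<lambda>t. (1 / real t) * (\<Sum>s = 2..t.
             (\<Sum>l = 1..min j (s - 1). kt (j - l) s x *
                (\<Sum>i = 0..l. (1 / real (s - i))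
                    * inverse (alg_Pbar \<beta> (\<lambda>n. y (int n) x) (s - i))
                    * alg_phi \<beta> (\<lambda>n. y (int n) x) (s - i - 1)
                    * alg_e \<beta> (\<lambda>n. y (int n) x) (s - i))) ^ p))
             \<longlonglongrightarrow> 0) \<and>
   (AE x in M. (\<lambda>t. (1 / real t) * (\<Sum>s = 2..t.
             (\<Sum>l = 1..min j (s - 1). kt (j - l) s x *
                (\<Prod>i = 1..l. (1 / real (s - i))
                    * inverse (alg_Pbar \<beta> (\<lambda>n. y (int n) x) (s - i))
                    * alg_phi \<beta> (\<lambda>n. y (int n) x) (s - i - 1)
                    * alg_e \<beta> (\<lambda>n. y (int n) x) (s - i))) ^ p
             * (\<epsilon> (int s - int j) x)\<^sup>2))
             \<longlonglongrightarrow> 0)"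
  unfolding theta_incr_def[symmetric] AE_conj_iff[symmetric]
  using AE_good_path kt
proof eventually_elim
  case (elim x)
  note incr = good_path_theta(1)[OF elim(1)]
  have kt': "\<And>j t. 1 \<le> t \<Longrightarrow> \<bar>kt j t x\<bar> \<le> ktb j x" using elim(2) by blast
  have "(\<lambda>s. \<Sum>l = 1..min j (s - 1). kt (j - l) s x * (\<Prod>i = 1..l. theta_incr \<beta> (ypath x) (s - i)))
      \<longlonglongrightarrow> 0"
    by (rule weighted_sum_tendsto_zero[OF shifted_prod_tendsto_zero[OF incr] kt'])
  moreover have "(\<lambda>s. \<Sum>l = 1..min j (s - 1).
      kt (j - l) s x * (\<Sum>i = 0..l. theta_incr \<beta> (ypath x) (s - i)))
      \<longlonglongrightarrow> 0"
    by (rule weighted_sum_tendsto_zero[OF shifted_sum_tendsto_zero[OF incr] kt'])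
  ultimately show ?case
    using p good_path_Bseq_eps(2)[OF elim(1)]
    by (intro conjI cesaro_tendsto_zero tendsto_zero_mult_Bseq tendsto_zero_power)
qed

lemma AE_cesaro_kappa_phi_sq_shift:
  "AE x in M. (\<lambda>t.
      (1 / real t) * (\<Sum>s = 1..t.
         (kappa_phi \<kappa> \<beta> (alg_theta \<beta> (\<lambda>n. y (int n) x)) s j)\<^sup>2 * (\<epsilon> (int s - int j) x)\<^sup>2)
    - (1 / real t) * (\<Sum>s = i + 1..t.
         (kappa_phi \<kappa> \<beta> (alg_theta \<beta> (\<lambda>n. y (int n) x)) (s - i) j)\<^sup>2 * (\<epsilon> (int s - int j) x)\<^sup>2))
    \<longlonglongrightarrow> 0"
  using AE_good_path
proof eventually_elim
  case (elim x)
  show ?case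
    by (rule cesaro_sq_shift_diff_tendsto_zero
        [OF slowly_varying_kappa_phi[OF good_path_theta(2)[OF elim]]
          good_path_Bseq_eps(2)[OF elim]])
qed

text \<open>
  Evaluating kappa^phi at s - j instead of s makes the weight F_(s-j-1)-measurable (eps_(s-l)
  is too, as l > j), i.e. predictable for eps_(s-j).
\<close>

definition cross_weight :: "nat \<Rightarrow> nat \<Rightarrow> nat \<Rightarrow> nat \<Rightarrow> 'a \<Rightarrow> real" where
  "cross_weight j l m s x = (if l + 2 \<le> s then
     clip (real m) (kappa_phi \<kappa> \<beta> (alg_theta \<beta> (ypath x)) (s - j) j
                    * kappa_phi \<kappa> \<beta> (alg_theta \<beta> (ypath x)) (s - j) l)
     * \<epsilon> (int s - int l) x else 0)"

lemma measurable_cross_weight: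
  assumes "j < l"
  shows "cross_weight j l m s \<in> borel_measurable (F (int s - int j - 1))"
proof (cases "l + 2 \<le> s")
  case True
  then have idx: "int (s - j) - 1 = int s - int j - 1" using assms by simp
  have "(\<lambda>x. kappa_phi \<kappa> \<beta> (alg_theta \<beta> (ypath x)) (s - j) i)
      \<in> borel_measurable (F (int s - int j - 1))"
    for i using measurable_kappa_phi_nat_filt[of \<kappa> \<beta> y "s - j" i M] unfolding idx .
  moreover have "\<epsilon> (int s - int l) \<in> borel_measurable (F (int s - int j - 1))"
    by (rule measurable_nat_filt_mono[OF _ mds_meas]) (use assms in simp)
  ultimately show ?thesis using True unfolding cross_weight_def by measurable
next
  case False
  then have "cross_weight j l m s = (\<lambda>x. 0)" by (simp add: fun_eq_iff cross_weight_def)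
  then show ?thesis by simp
qed

lemma AE_mean_cross_weight_eps:
  assumes "j < l"
  shows "AE x in M. \<forall>m::nat. (\<lambda>n. (\<Sum>u<n. cross_weight j l m u x * \<epsilon> (int u - int j) x) / real n) \<longlonglongrightarrow> 0"
proof -
  have "AE x in M. (\<lambda>n. (\<Sum>u<n. cross_weight j l m u x * \<epsilon> (int u - int j) x) / real n) \<longlonglongrightarrow> 0"
    for m :: nat
  proof (rule predictable_strong_law[where F = F and \<tau> = "\<lambda>u. int u - int j" and B = K
        and Bg = "real m * K" and \<zeta> = \<epsilon> and g = "cross_weight j l m"])
    show "AE x in M. \<forall>s. \<bar>cross_weight j l m s x\<bar> \<le> real m * K"
      using D4
    proof eventually_elim
      case (elim x)
      then have "0 \<le> K" by (meson abs_ge_zero order_trans)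
      with elim show ?case by (auto simp: cross_weight_def abs_mult intro!: mult_mono abs_clip_le)
    qed
  qed (auto simp: strict_mono_def subalgebra_nat_filt[OF y_rv] D4 mds_meas assms
      intro: measurable_nat_filt_mono integral_mult_eps measurable_cross_weight)
  then show ?thesis by (subst AE_all_countable) simp
qed

lemma AE_cesaro_kappa_phi_cross_less:
  assumes "j < l"
  shows "AE x in M. (\<lambda>t. (1 / real t) * (\<Sum>s = max (j + 2) (l + 2)..t.
      kappa_phi \<kappa> \<beta> (alg_theta \<beta> (\<lambda>n. y (int n) x)) s j * \<epsilon> (int s - int j) x
      * kappa_phi \<kappa> \<beta> (alg_theta \<beta> (\<lambda>n. y (int n) x)) s l * \<epsilon> (int s - int l) x)) \<longlonglongrightarrow> 0"
  using AE_good_path AE_mean_cross_weight_eps[OF assms]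
proof eventually_elim
  case (elim x)
  define kj where "kj s = kappa_phi \<kappa> \<beta> (alg_theta \<beta> (ypath x)) s j" for s
  define kl where "kl s = kappa_phi \<kappa> \<beta> (alg_theta \<beta> (ypath x)) s l" for s
  have kj: "slowly_varying kj" and kl: "slowly_varying kl"
    unfolding kj_def[abs_def] kl_def[abs_def]
    by (intro slowly_varying_kappa_phi good_path_theta(2)[OF elim(1)])+
  then have "Bseq (\<lambda>s. kj s * kl s)" by (intro slowly_varying_Bseq slowly_varying_mult)
  then obtain C where C: "\<And>s. \<bar>kj s * kl s\<bar> \<le> C" unfolding Bseq_def by auto
  define f where "f s = kj (s - j) * kl (s - j) * \<epsilon> (int s - int j) x * \<epsilon> (int s - int l) x" for s
  define m where "m = nat \<lceil>C\<rceil>"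
  have "C \<le> real m" unfolding m_def by linarith
  then have "clip (real m) (kj s * kl s) = kj s * kl s" for s
    using C[of s] by (intro clip_eq) linarith
  then have "cross_weight j l m s x * \<epsilon> (int s - int j) x = (if l + 2 \<le> s then f s else 0)" for s
    by (simp add: cross_weight_def f_def kj_def kl_def)
  moreover have "{s \<in> {..t}. l + 2 \<le> s} = {l + 2..t}" for t by auto
  ultimately have sum_eq: "(\<Sum>u\<le>t. cross_weight j l m u x * \<epsilon> (int u - int j) x) = (\<Sum>s = l + 2..t. f s)"
    for t by (simp add: sum.inter_filter[symmetric])
  have "(\<lambda>n. (\<Sum>u<n. cross_weight j l m u x * \<epsilon> (int u - int j) x) / real n) \<longlonglongrightarrow> 0"
    using elim(2) by blast
  from mean_lessThan_imp_atMost_tendsto_zero[OF this]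
  have "(\<lambda>t. (1 / real t) * (\<Sum>s = l + 2..t. f s)) \<longlonglongrightarrow> 0" unfolding sum_eq .
  from cesaro_shift_product_tendsto_zero[OF kj kl good_path_Bseq_eps(1)[OF elim(1)]
      good_path_Bseq_eps(1)[OF elim(1)] this[unfolded f_def]]
  have "(\<lambda>t. (1 / real t) * (\<Sum>s = l + 2..t. kj s * \<epsilon> (int s - int j) x * kl s * \<epsilon> (int s - int l) x))
      \<longlonglongrightarrow> 0" .
  moreover have "max (j + 2) (l + 2) = l + 2" using assms by simp
  ultimately show ?case unfolding kj_def kl_def by simp
qed

lemma AE_cesaro_kappa_phi_cross:
  assumes "j \<noteq> l"
  shows "AE x in M. (\<lambda>t. (1 / real t) * (\<Sum>s = max (j + 2) (l + 2)..t.
      kappa_phi \<kappa> \<beta> (alg_theta \<beta> (\<lambda>n. y (int n) x)) s j * \<epsilon> (int s - int j) x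
      * kappa_phi \<kappa> \<beta> (alg_theta \<beta> (\<lambda>n. y (int n) x)) s l * \<epsilon> (int s - int l) x)) \<longlonglongrightarrow> 0"
proof (cases "j < l")
  case False
  with assms have "l < j" by simp
  from AE_cesaro_kappa_phi_cross_less[OF this] show ?thesis by (simp add: max.commute mult_ac)
qed (rule AE_cesaro_kappa_phi_cross_less)

end

theorem lemma4p1:
  fixes M :: "'a measure"
    and y \<epsilon> :: "int \<Rightarrow> 'a \<Rightarrow> real"
    and \<kappa> :: "nat \<Rightarrow> real"
    and \<sigma>2 K \<beta> :: real
    and kstar :: "'a \<Rightarrow> nat" and Kstar :: "'a \<Rightarrow> real"
  assumes prob: "prob_space M"
    and y_rv: "\<And>t. y t \<in> borel_measurable M"
    and y_sq_int: "\<And>t. integrable M (\<lambda>x. (y t x)\<^sup>2)"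
    and y_mean0: "\<And>t. integral\<^sup>L M (y t) = 0"
    and y_cov_stat: "\<And>t h. integral\<^sup>L M (\<lambda>x. y (t + h) x * y t x) = integral\<^sup>L M (\<lambda>x. y h x * y 0 x)"
    and D1: "measure M {x \<in> space M. (y 1 x)\<^sup>2 > 0} = 1"
    and D2_k0: "\<kappa> 0 = 1"
    and D2_abs: "summable (\<lambda>s. \<bar>\<kappa> s\<bar>)"
    and D2_root: "\<And>z::complex. norm z \<le> 1 \<Longrightarrow> (\<Sum>s. complex_of_real (\<kappa> s) * z ^ s) \<noteq> 0"
    and D2_rep: "AE x in M. \<forall>t. (\<lambda>s. \<kappa> s * \<epsilon> (t - int s) x) sums y t x"
    and mds_meas: "\<And>t. \<epsilon> t \<in> borel_measurable (nat_filt M y t)"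
    and mds_int: "\<And>t. integrable M (\<epsilon> t)"
    and mds: "\<And>t. AE x in M. real_cond_exp M (nat_filt M y (t - 1)) (\<epsilon> t) x = 0"
    and D3: "\<And>t. AE x in M. real_cond_exp M (nat_filt M y (t - 1)) (\<lambda>x. (\<epsilon> t x)\<^sup>2) x = \<sigma>2"
    and D4: "AE x in M. \<forall>t. \<bar>\<epsilon> t x\<bar> \<le> K"
    and beta: "0 \<le> \<beta>" "\<beta> \<le> 1"
    and kstar_rv: "kstar \<in> measurable M (count_space UNIV)"
    and Kstar_rv: "Kstar \<in> borel_measurable M"
    and Kstar_bd: "AE x in M. 0 < Kstar x \<and> Kstar x < 1"
    and theta_bd: "AE x in M. \<forall>t\<ge>1.
        \<bar>alg_theta \<beta> (\<lambda>n. y (int n) x) (t + kstar x)\<bar> \<le> Kstar x"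
  shows
    "(\<forall>(kt :: nat \<Rightarrow> nat \<Rightarrow> 'a \<Rightarrow> real) (ktb :: nat \<Rightarrow> 'a \<Rightarrow> real).
        (\<forall>j t. t \<ge> 1 \<longrightarrow> kt j t \<in> borel_measurable (nat_filt M y (int t - 1))) \<and>
        (AE x in M. \<forall>j t. t \<ge> 1 \<longrightarrow> \<bar>kt j t x\<bar> \<le> ktb j x) \<and>
        (AE x in M. summable (\<lambda>j. ktb j x)) \<longrightarrow>
        (\<forall>p::nat. p \<ge> 1 \<longrightarrow> (\<forall>j::nat.
          (AE x in M. (\<lambda>t. (1 / real t) * (\<Sum>s = 2..t.
             (\<Sum>l = 1..min j (s - 1). kt (j - l) s x *
                (\<Prod>i = 1..l. (1 / real (s - i))
                    * inverse (alg_Pbar \<beta> (\<lambda>n. y (int n) x) (s - i))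
                    * alg_phi \<beta> (\<lambda>n. y (int n) x) (s - i - 1)
                    * alg_e \<beta> (\<lambda>n. y (int n) x) (s - i))) ^ p))
             \<longlonglongrightarrow> 0) \<and>
          (AE x in M. (\<lambda>t. (1 / real t) * (\<Sum>s = 2..t.
             (\<Sum>l = 1..min j (s - 1). kt (j - l) s x *
                (\<Sum>i = 0..l. (1 / real (s - i))
                    * inverse (alg_Pbar \<beta> (\<lambda>n. y (int n) x) (s - i))
                    * alg_phi \<beta> (\<lambda>n. y (int n) x) (s - i - 1)
                    * alg_e \<beta> (\<lambda>n. y (int n) x) (s - i))) ^ p))
             \<longlonglongrightarrow> 0) \<and>
          (AE x in M. (\<lambda>t. (1 / real t) * (\<Sum>s = 2..t.
             (\<Sum>l = 1..min j (s - 1). kt (j - l) s x *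
                (\<Prod>i = 1..l. (1 / real (s - i))
                    * inverse (alg_Pbar \<beta> (\<lambda>n. y (int n) x) (s - i))
                    * alg_phi \<beta> (\<lambda>n. y (int n) x) (s - i - 1)
                    * alg_e \<beta> (\<lambda>n. y (int n) x) (s - i))) ^ p
             * (\<epsilon> (int s - int j) x)\<^sup>2))
             \<longlonglongrightarrow> 0))))
     \<and>
     (\<forall>i j :: nat. i \<le> j \<longrightarrow>
        (AE x in M. (\<lambda>t.
            (1 / real t) * (\<Sum>s = 1..t.
               (kappa_phi \<kappa> \<beta> (alg_theta \<beta> (\<lambda>n. y (int n) x)) s j)\<^sup>2 * (\<epsilon> (int s - int j) x)\<^sup>2)
          - (1 / real t) * (\<Sum>s = i + 1..t.
               (kappa_phi \<kappa> \<beta> (alg_theta \<beta> (\<lambda>n. y (int n) x)) (s - i) j)\<^sup>2 * (\<epsilon> (int s - int j) x)\<^sup>2))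
          \<longlonglongrightarrow> 0))
     \<and>
     (\<forall>j l :: nat. j \<noteq> l \<longrightarrow>
        (AE x in M. (\<lambda>t. (1 / real t) * (\<Sum>s = max (j + 2) (l + 2)..t.
            kappa_phi \<kappa> \<beta> (alg_theta \<beta> (\<lambda>n. y (int n) x)) s j * \<epsilon> (int s - int j) x
            * kappa_phi \<kappa> \<beta> (alg_theta \<beta> (\<lambda>n. y (int n) x)) s l * \<epsilon> (int s - int l) x))
          \<longlonglongrightarrow> 0))"
proof -
  \<comment> \<open>Not needed: stationarity and integrability of y and eps, the root condition of (D2),
    measurability of kstar, Kstar and kt, 0 < Kstar, summability of ktb, and i \<le> j in (b).\<close>
  have "AE x in M. Kstar x < 1" using Kstar_bd by (rule eventually_mono) simp
  then interpret linear_process_algorithm M y \<epsilon> \<kappa> \<sigma>2 K \<beta> kstar Kstar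
    using prob y_rv D1 D2_k0 D2_abs D2_rep mds_meas mds D3 D4 beta theta_bd
    by (simp add: linear_process_algorithm_def)
  show ?thesis
  proof (intro conjI allI impI, goal_cases)
    case (1 kt ktb p j)
    then show ?case using AE_cesaro_increment_terms[of kt ktb p j] by blast
  next
    case (2 kt ktb p j)
    then show ?case using AE_cesaro_increment_terms[of kt ktb p j] by blast
  next
    case (3 kt ktb p j)
    then show ?case using AE_cesaro_increment_terms[of kt ktb p j] by blast
  next
    case (4 i j)
    show ?case by (rule AE_cesaro_kappa_phi_sq_shift)
  next
    case (5 j l)
    then show ?case by (rule AE_cesaro_kappa_phi_cross)
  qed
qed

end
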